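(* Let $G$ and $H$ be graphs, each with at least $2$ vertices. The direct product $G\times H$ is $1$-perfectly orientable if and only if one of the following holds: (i) $G$ is a $1$-linear forest and $H$ is arbitrary, or vice versa; (ii) $G$ is a $2$-linear forest and $H$ is a pseudoforest, or vice versa; (iii) $G$ is a $3$-linear forest and $H$ is a $4$-linear forest, or vice versa.
   Context: All graphs are finite and simple. An orientation of a graph $G$ is $1$-perfect if the out-neighborhood of every vertex induces a clique in $G$; $G$ is $1$-perfectly orientable if it admits a $1$-perfect orientation. The direct product $G\times H$ has vertex set $V(G)\times V(H)$, with $(u,v),(u',v')$ adjacent iff $uu'\in E(G)$ and $vv'\in E(H)$. For a positive integer $k$, a $k$-linear forest is a disjoint union of paths each having at most $k$ vertices (so $1$-linear forests are edgeless graphs). A pseudoforest is a graph each of whose connected components contains at most one cycle. *)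

theory Defs
  imports Main
begin

definition graph :: "'a set \<Rightarrow> ('a \<Rightarrow> 'a \<Rightarrow> bool) \<Rightarrow> bool" where
  "graph V E \<longleftrightarrow> finite V \<and> (\<forall>u v. E u v \<longrightarrow> u \<in> V \<and> v \<in> V)
     \<and> (\<forall>u v. E u v \<longrightarrow> E v u) \<and> (\<forall>u. \<not> E u u)"

definition orientation :: "('a \<Rightarrow> 'a \<Rightarrow> bool) \<Rightarrow> ('a \<Rightarrow> 'a \<Rightarrow> bool) \<Rightarrow> bool" where
  "orientation E D \<longleftrightarrow> (\<forall>u v. E u v \<longleftrightarrow> (D u v \<or> D v u)) \<and> (\<forall>u v. D u v \<longrightarrow> \<not> D v u)"

definition one_perfect :: "('a \<Rightarrow> 'a \<Rightarrow> bool) \<Rightarrow> ('a \<Rightarrow> 'a \<Rightarrow> bool) \<Rightarrow> bool" where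
  "one_perfect E D \<longleftrightarrow> (\<forall>v x y. D v x \<and> D v y \<and> x \<noteq> y \<longrightarrow> E x y)"

definition one_perfectly_orientable :: "'a set \<Rightarrow> ('a \<Rightarrow> 'a \<Rightarrow> bool) \<Rightarrow> bool" where
  "one_perfectly_orientable V E \<longleftrightarrow> (\<exists>D. orientation E D \<and> one_perfect E D)"

definition dprod_V :: "'a set \<Rightarrow> 'b set \<Rightarrow> ('a \<times> 'b) set" where
  "dprod_V V1 V2 = V1 \<times> V2"

definition dprod_E :: "('a \<Rightarrow> 'a \<Rightarrow> bool) \<Rightarrow> ('b \<Rightarrow> 'b \<Rightarrow> bool) \<Rightarrow> ('a \<times> 'b \<Rightarrow> 'a \<times> 'b \<Rightarrow> bool)" where
  "dprod_E E1 E2 = (\<lambda>(u,v) (u',v'). E1 u u' \<and> E2 v v')"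

definition induces_path :: "('a \<Rightarrow> 'a \<Rightarrow> bool) \<Rightarrow> 'a set \<Rightarrow> bool" where
  "induces_path E S \<longleftrightarrow> (\<exists>xs. xs \<noteq> [] \<and> distinct xs \<and> set xs = S \<and>
     (\<forall>u\<in>S. \<forall>v\<in>S. E u v \<longleftrightarrow>
        (\<exists>i. Suc i < length xs \<and> ((u = xs!i \<and> v = xs!Suc i) \<or> (v = xs!i \<and> u = xs!Suc i)))))"

definition linear_forest :: "nat \<Rightarrow> 'a set \<Rightarrow> ('a \<Rightarrow> 'a \<Rightarrow> bool) \<Rightarrow> bool" where
  "linear_forest k V E \<longleftrightarrow> (\<exists>P. \<Union>P = V \<and> (\<forall>S\<in>P. S \<noteq> {}) \<and>
     (\<forall>S\<in>P. \<forall>T\<in>P. S \<noteq> T \<longrightarrow> S \<inter> T = {}) \<and>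
     (\<forall>S\<in>P. induces_path E S \<and> card S \<le> k) \<and>
     (\<forall>S\<in>P. \<forall>T\<in>P. S \<noteq> T \<longrightarrow> (\<forall>u\<in>S. \<forall>v\<in>T. \<not> E u v)))"

text \<open>A cycle given as a list of distinct vertices (length at least 3), consecutive
  ones (cyclically) adjacent; the cycle as a subgraph is identified with its edge set.\<close>
definition is_cycle :: "'a set \<Rightarrow> ('a \<Rightarrow> 'a \<Rightarrow> bool) \<Rightarrow> 'a list \<Rightarrow> bool" where
  "is_cycle V E xs \<longleftrightarrow> length xs \<ge> 3 \<and> distinct xs \<and> set xs \<subseteq> V \<and>
     (\<forall>i < length xs. E (xs!i) (xs!((Suc i) mod length xs)))"

definition cycle_edges :: "'a list \<Rightarrow> 'a set set" where
  "cycle_edges xs = {{xs!i, xs!((Suc i) mod length xs)} | i. i < length xs}"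

definition connected_in :: "'a set \<Rightarrow> ('a \<Rightarrow> 'a \<Rightarrow> bool) \<Rightarrow> 'a \<Rightarrow> 'a \<Rightarrow> bool" where
  "connected_in V E u v \<longleftrightarrow> u \<in> V \<and> v \<in> V \<and> (\<lambda>x y. E x y \<and> x \<in> V \<and> y \<in> V)\<^sup>*\<^sup>* u v"

text \<open>Pseudoforest: every connected component contains at most one cycle, i.e. any
  two cycles lying in the same component are the same cycle (same edge set).\<close>
definition pseudoforest :: "'a set \<Rightarrow> ('a \<Rightarrow> 'a \<Rightarrow> bool) \<Rightarrow> bool" where
  "pseudoforest V E \<longleftrightarrow> (\<forall>xs ys. is_cycle V E xs \<and> is_cycle V E ys \<and>
     connected_in V E (hd xs) (hd ys) \<longrightarrow> cycle_edges xs = cycle_edges ys)"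

end

theory Submission
  imports Defs
begin

text \<open>
  Sufficiency is shown by explicit orientations. A product with an edgeless factor is edgeless.
  If \<open>G\<close> has maximum degree one and \<open>H\<close> is a pseudoforest, orient \<open>H\<close> so that every vertex has at most
  one out-neighbour and let \<open>G \<times> H\<close> inherit the orientation of the second coordinate. For a
  3-linear forest \<open>G\<close> and a 4-linear forest \<open>H\<close>, the position of a vertex on its path maps \<open>G \<times> H\<close>
  to \<open>P\<^sub>3 \<times> P\<^sub>4\<close>, and a suitable orientation of \<open>P\<^sub>3 \<times> P\<^sub>4\<close> pulls back.

  Necessity rests on one observation: in a 1-perfect orientation two out-neighbours of a vertex are
  adjacent, so on a triangle-free set of vertices every out-degree is at most one and the set
  spans at most as many edges as it has vertices. Counting edges excludes \<open>K\<^sub>1\<^sub>,\<^sub>3 \<times> P\<^sub>3\<close>,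
  \<open>P\<^sub>5 \<times> P\<^sub>3\<close>, \<open>P\<^sub>4 \<times> P\<^sub>4\<close> and \<open>C \<times> P\<^sub>3\<close> for cycles \<open>C\<close> (with a separate argument for
  \<open>K\<^sub>3 \<times> K\<^sub>3\<close>), and shows that \<open>K\<^sub>2 \<times> H\<close>, hence \<open>H\<close>, is a pseudoforest as soon as \<open>G\<close> has
  an edge. If neither factor has maximum degree at most one, both are therefore linear forests
  with paths on at most four vertices, and one of them has no path on four vertices.
\<close>

lemma graph_edgeD: "graph V E \<Longrightarrow> E u v \<Longrightarrow> u \<in> V \<and> v \<in> V"
  by (simp add: graph_def)

lemma graph_sym: "graph V E \<Longrightarrow> E u v \<Longrightarrow> E v u"
  by (simp add: graph_def)

lemma graph_irrefl: "graph V E \<Longrightarrow> \<not> E u u"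
  by (simp add: graph_def)

lemma graph_finite: "graph V E \<Longrightarrow> finite V"
  by (simp add: graph_def)

lemma dprod_E_Pair [simp]: "dprod_E E1 E2 (a, b) (c, d) \<longleftrightarrow> E1 a c \<and> E2 b d"
  by (simp add: dprod_E_def)

lemma dprod_E_iff: "dprod_E E1 E2 p q \<longleftrightarrow> E1 (fst p) (fst q) \<and> E2 (snd p) (snd q)"
  by (cases p; cases q) simp

lemma orientation_sym: "orientation E D \<Longrightarrow> E u v \<Longrightarrow> E v u"
  by (auto simp: orientation_def)

lemma one_perfectly_orientable_dprod_swap:
  assumes "one_perfectly_orientable (dprod_V V2 V1) (dprod_E E2 E1)"
  shows "one_perfectly_orientable (dprod_V V1 V2) (dprod_E E1 E2)"
proof -
  obtain D where D: "orientation (dprod_E E2 E1) D" "one_perfect (dprod_E E2 E1) D"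
    using assms unfolding one_perfectly_orientable_def by blast
  have swap: "dprod_E E1 E2 p q = dprod_E E2 E1 (prod.swap p) (prod.swap q)" for p q
    by (auto simp: dprod_E_iff)
  let ?D = "\<lambda>p q. D (prod.swap p) (prod.swap q)"
  have "orientation (dprod_E E1 E2) ?D"
    using D(1) unfolding orientation_def swap by blast
  moreover have "one_perfect (dprod_E E1 E2) ?D"
    using D(2) unfolding one_perfect_def swap by (metis swap_swap)
  ultimately show ?thesis unfolding one_perfectly_orientable_def by blast
qed

text \<open>In a 1-perfect orientation two out-neighbours of a vertex span a triangle with it, so on a
  triangle-free vertex set every vertex has at most one out-neighbour, and the set spans at most
  as many edges as it has vertices.\<close>

lemma card_edges_le_if_triangle_free:
  assumes D: "orientation E D" "one_perfect E D" and "finite S"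
    and triangle_free: "\<And>a b c. a \<in> S \<Longrightarrow> b \<in> S \<Longrightarrow> c \<in> S \<Longrightarrow> E a b \<Longrightarrow> E b c \<Longrightarrow> \<not> E a c"
  shows "card {(x, y). x \<in> S \<and> y \<in> S \<and> E x y} \<le> 2 * card S"
proof -
  let ?A = "{(x, y). x \<in> S \<and> y \<in> S \<and> D x y}"
  have "inj_on fst ?A"
  proof (rule inj_onI, clarsimp)
    fix v x y assume "v \<in> S" "x \<in> S" "y \<in> S" "D v x" "D v y"
    with D triangle_free[of x v y] show "x = y"
      unfolding orientation_def one_perfect_def by blast
  qed
  then have card_A: "card ?A \<le> card S"
    by (rule card_inj_on_le) (auto simp: \<open>finite S\<close>)
  have "{(x, y). x \<in> S \<and> y \<in> S \<and> E x y} = ?A \<union> prod.swap ` ?A"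
    using D(1) unfolding orientation_def by auto
  also have "card \<dots> \<le> card ?A + card (prod.swap ` ?A)"
    by (rule card_Un_le)
  also have "\<dots> \<le> 2 * card ?A"
  proof -
    have "finite ?A"
      by (rule finite_subset[of _ "S \<times> S"]) (use \<open>finite S\<close> in auto)
    then show ?thesis using card_image_le[of ?A prod.swap] by simp
  qed
  finally show ?thesis using card_A by linarith
qed

corollary bipartite_edges_le_if_one_perfect:
  assumes D: "orientation E D" "one_perfect E D"
    and indep: "\<forall>x\<in>set as. \<forall>y\<in>set as. \<not> E x y" "\<forall>x\<in>set bs. \<forall>y\<in>set bs. \<not> E x y"
    and es: "distinct es" "\<forall>(x, y)\<in>set es. x \<in> set as \<and> y \<in> set bs \<and> E x y"
  shows "length es \<le> length as + length bs"
proof -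
  let ?S = "set as \<union> set bs"
  have "set es \<inter> prod.swap ` set es = {}"
  proof (rule ccontr)
    assume "set es \<inter> prod.swap ` set es \<noteq> {}"
    then obtain x y where "(x, y) \<in> set es" "(y, x) \<in> set es" by auto
    with es(2) have "x \<in> set as" "y \<in> set as" "E x y" by auto
    with indep(1) show False by blast
  qed
  then have "2 * length es = card (set es \<union> prod.swap ` set es)"
    using es(1) by (simp add: card_Un_disjoint card_image distinct_card)
  also have "\<dots> \<le> card {(x, y). x \<in> ?S \<and> y \<in> ?S \<and> E x y}"
  proof (rule card_mono)
    show "finite {(x, y). x \<in> ?S \<and> y \<in> ?S \<and> E x y}"
      by (rule finite_subset[of _ "?S \<times> ?S"]) auto
    show "set es \<union> prod.swap ` set es \<subseteq> {(x, y). x \<in> ?S \<and> y \<in> ?S \<and> E x y}"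
      using es(2) orientation_sym[OF D(1)] by auto
  qed
  also have "\<dots> \<le> 2 * card ?S"
    using indep by (intro card_edges_le_if_triangle_free[OF D]) auto
  also have "\<dots> \<le> 2 * (length as + length bs)"
    using card_Un_le[of "set as" "set bs"] card_length[of as] card_length[of bs] by simp
  finally show ?thesis by simp
qed

lemma claw_times_P3_not_one_perfect:
  assumes gG: "graph V1 E1" and gH: "graph V2 E2"
    and D: "orientation (dprod_E E1 E2) D" "one_perfect (dprod_E E1 E2) D"
    and claw: "E1 c l1" "E1 c l2" "E1 c l3" "distinct [l1, l2, l3]"
    and P3: "E2 m e1" "E2 m e2" "e1 \<noteq> e2"
  shows False
proof -
  have "length [((c, e1), (l1, m)), ((c, e1), (l2, m)), ((c, e1), (l3, m)),
                ((c, e2), (l1, m)), ((c, e2), (l2, m)), ((c, e2), (l3, m))]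
        \<le> length [(c, e1), (c, e2)] + length [(l1, m), (l2, m), (l3, m)]"
    by (rule bipartite_edges_le_if_one_perfect[OF D])
      (use claw P3 graph_irrefl[OF gG] graph_irrefl[OF gH] graph_sym[OF gH] in auto)
  then show False by simp
qed

lemma P5_times_P3_not_one_perfect:
  assumes gG: "graph V1 E1" and gH: "graph V2 E2"
    and D: "orientation (dprod_E E1 E2) D" "one_perfect (dprod_E E1 E2) D"
    and P5: "E1 v1 v2" "E1 v2 v3" "E1 v3 v4" "E1 v4 v5" "distinct [v1, v2, v3, v4, v5]"
      "\<not> E1 v2 v4"
    and P3: "E2 m e1" "E2 m e2" "e1 \<noteq> e2"
  shows False
proof -
  have "length [((v1, m), (v2, e1)), ((v1, m), (v2, e2)), ((v3, m), (v2, e1)), ((v3, m), (v2, e2)),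
                ((v3, m), (v4, e1)), ((v3, m), (v4, e2)), ((v5, m), (v4, e1)), ((v5, m), (v4, e2))]
        \<le> length [(v1, m), (v3, m), (v5, m)] + length [(v2, e1), (v2, e2), (v4, e1), (v4, e2)]"
    by (rule bipartite_edges_le_if_one_perfect[OF D])
      (use P5 P3 graph_irrefl[OF gG] graph_irrefl[OF gH] graph_sym[OF gG] graph_sym[OF gH] in auto)
  then show False by simp
qed

lemma P4_times_P4_not_one_perfect:
  assumes gG: "graph V1 E1" and gH: "graph V2 E2"
    and D: "orientation (dprod_E E1 E2) D" "one_perfect (dprod_E E1 E2) D"
    and P4: "E1 v1 v2" "E1 v2 v3" "E1 v3 v4" "distinct [v1, v2, v3, v4]"
      "\<not> E1 v1 v3" "\<not> E1 v2 v4"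
    and P4': "E2 w1 w2" "E2 w2 w3" "E2 w3 w4" "distinct [w1, w2, w3, w4]"
  shows False
proof -
  have "length [((v1, w1), (v2, w2)), ((v1, w3), (v2, w2)), ((v1, w3), (v2, w4)),
                ((v3, w1), (v2, w2)), ((v3, w1), (v4, w2)), ((v3, w3), (v2, w2)),
                ((v3, w3), (v2, w4)), ((v3, w3), (v4, w2)), ((v3, w3), (v4, w4))]
        \<le> length [(v1, w1), (v1, w3), (v3, w1), (v3, w3)]
           + length [(v2, w2), (v2, w4), (v4, w2), (v4, w4)]"
    by (rule bipartite_edges_le_if_one_perfect[OF D])
      (use P4 P4' graph_irrefl[OF gG] graph_irrefl[OF gH] graph_sym[OF gG] graph_sym[OF gH] in auto)
  then show False by simp
qed

text \<open>Counting does not suffice here: \<open>K\<^sub>3 \<times> K\<^sub>3\<close> has 9 vertices and 18 edges, and out-neighbourhoods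
  may have two elements. Instead, the 18 edge clauses together with the 36 clauses forbidding
  two non-adjacent out-neighbours of a vertex are propositionally unsatisfiable.\<close>

lemma triangle_times_triangle_not_one_perfect:
  assumes gG: "graph V1 E1" and gH: "graph V2 E2"
    and D: "orientation (dprod_E E1 E2) D" "one_perfect (dprod_E E1 E2) D"
    and K3: "E1 t1 t2" "E1 t2 t3" "E1 t1 t3"
    and K3': "E2 m e1" "E2 m e2" "E2 e1 e2"
  shows False
proof -
  have irr: "\<And>x. \<not> E1 x x" "\<And>x. \<not> E2 x x"
    using graph_irrefl[OF gG] graph_irrefl[OF gH] by auto
  have sym: "E1 t2 t1" "E1 t3 t2" "E1 t3 t1" "E2 e1 m" "E2 e2 m" "E2 e2 e1"
    using K3 K3' graph_sym[OF gG] graph_sym[OF gH] by metis+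
  have dist: "t1 \<noteq> t2" "t2 \<noteq> t3" "t1 \<noteq> t3" "m \<noteq> e1" "m \<noteq> e2" "e1 \<noteq> e2"
    using K3 K3' irr by metis+
  have edge: "D x y \<or> D y x" if "dprod_E E1 E2 x y" for x y
    using D(1) that unfolding orientation_def by blast
  have out: "\<not> D v x \<or> \<not> D v y" if "x \<noteq> y" "\<not> dprod_E E1 E2 x y" for v x y
    using D(2) that unfolding one_perfect_def by blast
  have
    "D (t1, m) (t2, e1) \<or> D (t2, e1) (t1, m)"
    "D (t1, m) (t2, e2) \<or> D (t2, e2) (t1, m)"
    "D (t1, m) (t3, e1) \<or> D (t3, e1) (t1, m)"
    "D (t1, m) (t3, e2) \<or> D (t3, e2) (t1, m)"
    "D (t1, e1) (t2, m) \<or> D (t2, m) (t1, e1)"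
    "D (t1, e1) (t2, e2) \<or> D (t2, e2) (t1, e1)"
    "D (t1, e1) (t3, m) \<or> D (t3, m) (t1, e1)"
    "D (t1, e1) (t3, e2) \<or> D (t3, e2) (t1, e1)"
    "D (t1, e2) (t2, m) \<or> D (t2, m) (t1, e2)"
    "D (t1, e2) (t2, e1) \<or> D (t2, e1) (t1, e2)"
    "D (t1, e2) (t3, m) \<or> D (t3, m) (t1, e2)"
    "D (t1, e2) (t3, e1) \<or> D (t3, e1) (t1, e2)"
    "D (t2, m) (t3, e1) \<or> D (t3, e1) (t2, m)"
    "D (t2, m) (t3, e2) \<or> D (t3, e2) (t2, m)"
    "D (t2, e1) (t3, m) \<or> D (t3, m) (t2, e1)"
    "D (t2, e1) (t3, e2) \<or> D (t3, e2) (t2, e1)"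
    "D (t2, e2) (t3, m) \<or> D (t3, m) (t2, e2)"
    "D (t2, e2) (t3, e1) \<or> D (t3, e1) (t2, e2)"
    by (rule edge; simp add: K3 K3' sym)+
  moreover have
    "\<not> D (t1, m) (t2, e1) \<or> \<not> D (t1, m) (t2, e2)"
    "\<not> D (t1, m) (t2, e1) \<or> \<not> D (t1, m) (t3, e1)"
    "\<not> D (t1, m) (t2, e2) \<or> \<not> D (t1, m) (t3, e2)"
    "\<not> D (t1, m) (t3, e1) \<or> \<not> D (t1, m) (t3, e2)"
    "\<not> D (t1, e1) (t2, m) \<or> \<not> D (t1, e1) (t2, e2)"
    "\<not> D (t1, e1) (t2, m) \<or> \<not> D (t1, e1) (t3, m)"
    "\<not> D (t1, e1) (t2, e2) \<or> \<not> D (t1, e1) (t3, e2)"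
    "\<not> D (t1, e1) (t3, m) \<or> \<not> D (t1, e1) (t3, e2)"
    "\<not> D (t1, e2) (t2, m) \<or> \<not> D (t1, e2) (t2, e1)"
    "\<not> D (t1, e2) (t2, m) \<or> \<not> D (t1, e2) (t3, m)"
    "\<not> D (t1, e2) (t2, e1) \<or> \<not> D (t1, e2) (t3, e1)"
    "\<not> D (t1, e2) (t3, m) \<or> \<not> D (t1, e2) (t3, e1)"
    "\<not> D (t2, m) (t1, e1) \<or> \<not> D (t2, m) (t1, e2)"
    "\<not> D (t2, m) (t1, e1) \<or> \<not> D (t2, m) (t3, e1)"
    "\<not> D (t2, m) (t1, e2) \<or> \<not> D (t2, m) (t3, e2)"
    "\<not> D (t2, m) (t3, e1) \<or> \<not> D (t2, m) (t3, e2)"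
    "\<not> D (t2, e1) (t1, m) \<or> \<not> D (t2, e1) (t1, e2)"
    "\<not> D (t2, e1) (t1, m) \<or> \<not> D (t2, e1) (t3, m)"
    "\<not> D (t2, e1) (t1, e2) \<or> \<not> D (t2, e1) (t3, e2)"
    "\<not> D (t2, e1) (t3, m) \<or> \<not> D (t2, e1) (t3, e2)"
    "\<not> D (t2, e2) (t1, m) \<or> \<not> D (t2, e2) (t1, e1)"
    "\<not> D (t2, e2) (t1, m) \<or> \<not> D (t2, e2) (t3, m)"
    "\<not> D (t2, e2) (t1, e1) \<or> \<not> D (t2, e2) (t3, e1)"
    "\<not> D (t2, e2) (t3, m) \<or> \<not> D (t2, e2) (t3, e1)"
    "\<not> D (t3, m) (t1, e1) \<or> \<not> D (t3, m) (t1, e2)"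
    "\<not> D (t3, m) (t1, e1) \<or> \<not> D (t3, m) (t2, e1)"
    "\<not> D (t3, m) (t1, e2) \<or> \<not> D (t3, m) (t2, e2)"
    "\<not> D (t3, m) (t2, e1) \<or> \<not> D (t3, m) (t2, e2)"
    "\<not> D (t3, e1) (t1, m) \<or> \<not> D (t3, e1) (t1, e2)"
    "\<not> D (t3, e1) (t1, m) \<or> \<not> D (t3, e1) (t2, m)"
    "\<not> D (t3, e1) (t1, e2) \<or> \<not> D (t3, e1) (t2, e2)"
    "\<not> D (t3, e1) (t2, m) \<or> \<not> D (t3, e1) (t2, e2)"
    "\<not> D (t3, e2) (t1, m) \<or> \<not> D (t3, e2) (t1, e1)"
    "\<not> D (t3, e2) (t1, m) \<or> \<not> D (t3, e2) (t2, m)"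
    "\<not> D (t3, e2) (t1, e1) \<or> \<not> D (t3, e2) (t2, e1)"
    "\<not> D (t3, e2) (t2, m) \<or> \<not> D (t3, e2) (t2, e1)"
    by (rule out; simp add: irr dist)+
  ultimately show False by sat
qed

lemma mod_Suc_neq_mod_pred:
  assumes "3 \<le> (k::nat)" "i < k"
  shows "Suc i mod k \<noteq> (i + k - 1) mod k"
proof (cases "i = 0")
  case True
  then show ?thesis using assms by simp
next
  case False
  then have "(i + k - 1) mod k = i - 1"
    using assms by (simp add: mod_if)
  moreover have "Suc i mod k = (if Suc i = k then 0 else Suc i)"
    using assms by (simp add: mod_if)
  ultimately show ?thesis using assms False by auto
qed

lemma Suc_mod_pred_mod:
  assumes "i < (k::nat)"
  shows "Suc ((i + k - 1) mod k) mod k = i"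
proof -
  have "Suc ((i + k - 1) mod k) mod k = Suc (i + k - 1) mod k"
    by (simp add: mod_Suc_eq)
  also have "Suc (i + k - 1) = i + k" using assms by simp
  finally show ?thesis using assms by simp
qed

lemma cycle_times_P3_not_one_perfect_if_triangle_free:
  assumes gG: "graph V1 E1" and gH: "graph V2 E2"
    and D: "orientation (dprod_E E1 E2) D" "one_perfect (dprod_E E1 E2) D"
    and cyc: "is_cycle V1 E1 xs"
    and P3: "E2 m e1" "E2 m e2" "e1 \<noteq> e2"
    and triangle_free: "\<not> E2 e1 e2 \<or> (\<forall>a b c. E1 a b \<longrightarrow> E1 b c \<longrightarrow> \<not> E1 a c)"
  shows False
proof -
  define k where "k = length xs"
  have k3: "3 \<le> k" and dist: "distinct xs" and cE: "\<And>i. i < k \<Longrightarrow> E1 (xs!i) (xs!(Suc i mod k))"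
    using cyc unfolding is_cycle_def k_def by auto
  have irr: "\<And>x. \<not> E1 x x" "\<And>x. \<not> E2 x x"
    using graph_irrefl[OF gG] graph_irrefl[OF gH] by auto
  have sym: "\<And>x y. E1 x y \<Longrightarrow> E1 y x" "\<And>x y. E2 x y \<Longrightarrow> E2 y x"
    using graph_sym[OF gG] graph_sym[OF gH] by auto
  define S where "S = set xs \<times> {m, e1, e2}"
  have "finite S" unfolding S_def by auto
  have card_S: "card S \<le> 3 * k"
    using card_length[of "[m, e1, e2]"] dist
    by (simp add: S_def card_cartesian_product distinct_card k_def)
  have S_triangle_free: "\<not> dprod_E E1 E2 a c"
    if "a \<in> S" "b \<in> S" "c \<in> S" "dprod_E E1 E2 a b" "dprod_E E1 E2 b c" for a b c
  proof
    assume "dprod_E E1 E2 a c"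
    with that have G: "E1 (fst a) (fst b)" "E1 (fst b) (fst c)" "E1 (fst a) (fst c)"
      and H: "E2 (snd a) (snd b)" "E2 (snd b) (snd c)" "E2 (snd a) (snd c)"
      by (auto simp: dprod_E_iff)
    have "snd a \<in> {m, e1, e2}" "snd b \<in> {m, e1, e2}" "snd c \<in> {m, e1, e2}"
      using that S_def by auto
    then have "E2 e1 e2"
      using H irr(2) sym(2) by (elim insertE emptyE) metis+
    then show False using triangle_free G by blast
  qed
  text \<open>The \<open>8k\<close> ordered pairs \<open>((x\<^sub>i, m), (x\<^sub>i\<^sub>\<plusminus>\<^sub>1, e))\<close> and their reverses are edges on \<open>S\<close>.\<close>
  define nb where "nb i s = (if s then Suc i mod k else (i + k - 1) mod k)" for i s
  define g where "g = (\<lambda>(i, s, t, d).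
     let p = ((xs!i, m), (xs!(nb i s), if t then e1 else e2)) in if d then p else prod.swap p)"
  have nb_less: "nb i s < k" for i s
    using k3 unfolding nb_def by auto
  have nb_edge: "E1 (xs!i) (xs!(nb i s))" if "i < k" for i s
  proof (cases s)
    case True
    then show ?thesis using cE[OF that] nb_def by simp
  next
    case False
    have "E1 (xs!((i + k - 1) mod k)) (xs!i)"
      using cE[of "(i + k - 1) mod k"] Suc_mod_pred_mod[OF that] k3 by simp
    then show ?thesis using False nb_def sym(1) by simp
  qed
  let ?I = "{..<k} \<times> (UNIV :: (bool \<times> bool \<times> bool) set)"
  have "inj_on g ?I"
  proof (rule inj_onI)
    fix p q assume "p \<in> ?I" "q \<in> ?I" "g p = g q"
    moreover obtain i s t d i' s' t' d' where "p = (i, s, t, d)" "q = (i', s', t', d')"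
      by (cases p, cases q) auto
    ultimately have i: "(i, s, t, d) \<in> ?I" "(i', s', t', d') \<in> ?I"
      and eq: "g (i, s, t, d) = g (i', s', t', d')" and pq: "p = (i, s, t, d)" "q = (i', s', t', d')"
      by auto
    have "m \<noteq> e1" "m \<noteq> e2" using P3 irr by metis+
    then have "d = d'" using eq unfolding g_def Let_def by (auto split: if_splits)
    then have "xs!i = xs!i'" "xs!(nb i s) = xs!(nb i' s')" "(if t then e1 else e2) = (if t' then e1 else e2)"
      using eq unfolding g_def Let_def by (auto split: if_splits)
    then have "i = i'" "nb i s = nb i' s'" "t = t'"
      using i nb_less dist P3(3) by (auto simp: k_def nth_eq_iff_index_eq split: if_splits)
    moreover from this have "s = s'"
      using mod_Suc_neq_mod_pred[OF k3, of i] i unfolding nb_def by (auto split: if_splits)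
    ultimately show "p = q" using \<open>d = d'\<close> pq by simp
  qed
  then have "8 * k = card (g ` ?I)"
    by (simp add: card_image card_cartesian_product card_UNIV_bool
        UNIV_Times_UNIV[symmetric] del: UNIV_Times_UNIV)
  also have "\<dots> \<le> card {(x, y). x \<in> S \<and> y \<in> S \<and> dprod_E E1 E2 x y}"
  proof (rule card_mono)
    show "finite {(x, y). x \<in> S \<and> y \<in> S \<and> dprod_E E1 E2 x y}"
      by (rule finite_subset[of _ "S \<times> S"]) (use \<open>finite S\<close> in auto)
    show "g ` ?I \<subseteq> {(x, y). x \<in> S \<and> y \<in> S \<and> dprod_E E1 E2 x y}"
    proof
      fix z assume "z \<in> g ` ?I"
      then obtain i s t d where z: "z = g (i, s, t, d)" and "i < k" by auto
      then have "xs!i \<in> set xs" "xs!(nb i s) \<in> set xs" "E1 (xs!(nb i s)) (xs!i)"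
        using nb_less nb_edge sym(1) by (auto simp: k_def)
      then show "z \<in> {(x, y). x \<in> S \<and> y \<in> S \<and> dprod_E E1 E2 x y}"
        using z nb_edge[OF \<open>i < k\<close>] P3 sym(2) unfolding g_def Let_def S_def by auto
    qed
  qed
  also have "\<dots> \<le> 2 * card S"
    using card_edges_le_if_triangle_free[OF D \<open>finite S\<close> S_triangle_free] .
  finally show False using card_S k3 by linarith
qed

lemma cycle_times_P3_not_one_perfect:
  assumes gG: "graph V1 E1" and gH: "graph V2 E2"
    and D: "orientation (dprod_E E1 E2) D" "one_perfect (dprod_E E1 E2) D"
    and cyc: "is_cycle V1 E1 xs"
    and P3: "E2 m e1" "E2 m e2" "e1 \<noteq> e2"
  shows False
proof (cases "E2 e1 e2 \<and> (\<exists>a b c. E1 a b \<and> E1 b c \<and> E1 a c)")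
  case True
  then show False
    using triangle_times_triangle_not_one_perfect[OF gG gH D _ _ _ P3(1,2)] by blast
next
  case False
  then show False
    using cycle_times_P3_not_one_perfect_if_triangle_free[OF assms] by blast
qed

lemma Suc_Suc_mod_neq:
  assumes "3 \<le> (k::nat)" "j < k"
  shows "Suc (Suc j mod k) mod k \<noteq> j"
proof -
  have "Suc (Suc j mod k) mod k = (j + 2) mod k" by (simp add: mod_Suc_eq)
  also have "\<dots> \<noteq> j"
  proof (cases "j + 2 < k")
    case False
    then have "(j + 2) mod k = j + 2 - k" using assms by (simp add: mod_if)
    then show ?thesis using assms False by simp
  qed simp
  finally show ?thesis .
qed

lemma is_cycleD:
  assumes "is_cycle V E xs"
  shows "3 \<le> length xs" "distinct xs" "\<And>i. i < length xs \<Longrightarrow> E (xs!i) (xs!(Suc i mod length xs))"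
    "set xs \<subseteq> V"
  using assms unfolding is_cycle_def by auto

lemma is_cycle_directed:
  assumes cyc: "is_cycle V E xs" and orient: "orientation E D"
    and unique: "right_unique D"
  shows "(\<forall>i<length xs. D (xs!i) (xs!(Suc i mod length xs))) \<or>
         (\<forall>i<length xs. D (xs!(Suc i mod length xs)) (xs!i))"
proof (cases "\<forall>i<length xs. D (xs!i) (xs!(Suc i mod length xs))")
  case True thus ?thesis by blast
next
  case False
  define k where "k = length xs"
  have k3: "3 \<le> k" and dist: "distinct xs" and cE: "\<And>i. i < k \<Longrightarrow> E (xs!i) (xs!(Suc i mod k))"
    using is_cycleD[OF cyc] k_def by auto
  have eD: "\<And>x y. E x y \<Longrightarrow> D x y \<or> D y x" using orient unfolding orientation_def by blast
  from False obtain i0 where i0: "i0 < k" "\<not> D (xs!i0) (xs!(Suc i0 mod k))" using k_def by auto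
  have b0: "D (xs!(Suc i0 mod k)) (xs!i0)" using eD[OF cE[OF i0(1)]] i0(2) by blast
  have step: "\<forall>n. D (xs!(Suc ((i0+n) mod k) mod k)) (xs!((i0+n) mod k))"
  proof
    fix n show "D (xs!(Suc ((i0+n) mod k) mod k)) (xs!((i0+n) mod k))"
    proof (induction n)
      case 0 thus ?case using b0 i0 by simp
    next
      case (Suc n)
      define j where "j = (i0+n) mod k"
      have jk: "j < k" using k3 j_def by simp
      have nj: "(i0 + Suc n) mod k = Suc j mod k" unfolding j_def by (simp add: mod_Suc_eq)
      have ih: "D (xs!(Suc j mod k)) (xs!j)" using Suc j_def by simp
      have jk1: "Suc j mod k < k" using k3 by simp
      have e: "E (xs!(Suc j mod k)) (xs!(Suc (Suc j mod k) mod k))" using cE[OF jk1] .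
      have "\<not> D (xs!(Suc j mod k)) (xs!(Suc (Suc j mod k) mod k))"
      proof
        assume "D (xs!(Suc j mod k)) (xs!(Suc (Suc j mod k) mod k))"
        then have "xs!j = xs!(Suc (Suc j mod k) mod k)" using right_uniqueD[OF unique] ih by blast
        moreover have "Suc (Suc j mod k) mod k < length xs" using k3 unfolding k_def[symmetric] by simp
        ultimately have "j = Suc (Suc j mod k) mod k" using nth_eq_iff_index_eq[OF dist] jk k_def by metis
        then show False using Suc_Suc_mod_neq[OF k3 jk] by simp
      qed
      hence "D (xs!(Suc (Suc j mod k) mod k)) (xs!(Suc j mod k))" using eD[OF e] by blast
      thus ?case using nj by simp
    qed
  qed
  have "\<forall>i<length xs. D (xs!(Suc i mod length xs)) (xs!i)"
  proof (intro allI impI)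
    fix i assume ik: "i < length xs"
    have "(i0 + (i + k - i0)) mod k = i" using ik i0 k_def by simp
    thus "D (xs!(Suc i mod length xs)) (xs!i)" using step[rule_format, of "i+k-i0"] k_def by simp
  qed
  thus ?thesis by blast
qed

lemma cycle_rtranclp:
  assumes cyc: "is_cycle V E xs" and orient: "orientation E D"
    and unique: "right_unique D"
    and xy: "x \<in> set xs" "y \<in> set xs"
  shows "D\<^sup>*\<^sup>* x y"
proof -
  define k where "k = length xs"
  have k3: "3 \<le> k" using is_cycleD[OF cyc] k_def by auto
  obtain i j where ij: "i < k" "j < k" "x = xs!i" "y = xs!j" using xy k_def by (metis in_set_conv_nth)
  from is_cycle_directed[OF cyc orient unique] show ?thesis
  proof
    assume F: "\<forall>i<length xs. D (xs!i) (xs!(Suc i mod length xs))"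
    have "\<forall>n. D\<^sup>*\<^sup>* (xs!i) (xs!((i+n) mod k))"
    proof
      fix n show "D\<^sup>*\<^sup>* (xs!i) (xs!((i+n) mod k))"
      proof (induction n)
        case 0 thus ?case using ij by simp
      next
        case (Suc n)
        have "(i+n) mod k < length xs" using k3 unfolding k_def[symmetric] by simp
        hence "D (xs!((i+n) mod k)) (xs!(Suc ((i+n) mod k) mod k))" using F k_def by simp
        moreover have "Suc ((i+n) mod k) mod k = (i + Suc n) mod k" by (simp add: mod_Suc_eq)
        ultimately show ?case using Suc by (metis rtranclp.rtrancl_into_rtrancl)
      qed
    qed
    moreover have "(i + (j+k-i)) mod k = j" using ij by simp
    ultimately show ?thesis using ij by metis
  next
    assume B: "\<forall>i<length xs. D (xs!(Suc i mod length xs)) (xs!i)"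
    have "\<forall>n. D\<^sup>*\<^sup>* (xs!((j+n) mod k)) (xs!j)"
    proof
      fix n show "D\<^sup>*\<^sup>* (xs!((j+n) mod k)) (xs!j)"
      proof (induction n)
        case 0 thus ?case using ij by simp
      next
        case (Suc n)
        have "(j+n) mod k < length xs" using k3 unfolding k_def[symmetric] by simp
        hence "D (xs!(Suc ((j+n) mod k) mod k)) (xs!((j+n) mod k))" using B k_def by simp
        moreover have "Suc ((j+n) mod k) mod k = (j + Suc n) mod k" by (simp add: mod_Suc_eq)
        ultimately show ?case using Suc by (metis converse_rtranclp_into_rtranclp)
      qed
    qed
    moreover have "(j + (i+k-j)) mod k = i" using ij by simp
    ultimately show ?thesis using ij by metis
  qed
qed

lemma backward_cycle_step:
  assumes cyc: "is_cycle V E xs" and orient: "orientation E D"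
    and unique: "right_unique D"
    and B: "\<forall>i<length xs. D (xs!(Suc i mod length xs)) (xs!i)" and i: "i < length xs"
  shows "D (xs!i) (xs!((i + length xs - 1) mod length xs))"
proof -
  define k where "k = length xs"
  have k3: "3 \<le> k" using is_cycleD[OF cyc] k_def by auto
  have p: "(i+k-1) mod k < k" using k3 by simp
  have ne: "xs \<noteq> []" using k3 k_def by auto
  have "Suc ((i+k-1) mod k) mod k = i" using Suc_mod_pred_mod[of i k] i k_def by simp
  thus ?thesis using B p k_def by metis
qed

lemma cycle_closed:
  assumes cyc: "is_cycle V E xs" and orient: "orientation E D"
    and unique: "right_unique D"
    and x: "x \<in> set xs" and d: "D x y"
  shows "y \<in> set xs"
proof -
  define k where "k = length xs"
  have k3: "3 \<le> k" using is_cycleD[OF cyc] k_def by auto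
  obtain i where i: "i < k" "x = xs!i" using x k_def by (metis in_set_conv_nth)
  from is_cycle_directed[OF cyc orient unique] show ?thesis
  proof
    assume F: "\<forall>i<length xs. D (xs!i) (xs!(Suc i mod length xs))"
    hence "y = xs!(Suc i mod k)" using right_uniqueD[OF unique] d i k_def by blast
    then show ?thesis using k3 nth_mem[of "Suc i mod k" xs] unfolding k_def[symmetric] by simp
  next
    assume B: "\<forall>i<length xs. D (xs!(Suc i mod length xs)) (xs!i)"
    hence "y = xs!((i+k-1) mod k)" using backward_cycle_step[OF cyc orient unique B] right_uniqueD[OF unique] d i k_def by blast
    then show ?thesis using k3 nth_mem[of "(i+k-1) mod k" xs] unfolding k_def[symmetric] by simp
  qed
qed

lemma cycle_closed_rtranclp:
  assumes cyc: "is_cycle V E xs" and orient: "orientation E D"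
    and unique: "right_unique D"
    and r: "D\<^sup>*\<^sup>* x y" and x: "x \<in> set xs"
  shows "y \<in> set xs"
  using r x by (induction rule: rtranclp_induct) (auto intro: cycle_closed[OF cyc orient unique])

lemma cycle_edges_right_unique:
  assumes cyc: "is_cycle V E xs" and orient: "orientation E D"
    and unique: "right_unique D"
  shows "cycle_edges xs = {{x,y} | x y. x \<in> set xs \<and> D x y}"
proof -
  define k where "k = length xs"
  have k3: "3 \<le> k" using is_cycleD[OF cyc] k_def by auto
  from is_cycle_directed[OF cyc orient unique] show ?thesis
  proof
    assume F: "\<forall>i<length xs. D (xs!i) (xs!(Suc i mod length xs))"
    show ?thesis
    proof
      show "cycle_edges xs \<subseteq> {{x,y} | x y. x \<in> set xs \<and> D x y}"
        unfolding cycle_edges_def using F by fastforce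
      show "{{x,y} | x y. x \<in> set xs \<and> D x y} \<subseteq> cycle_edges xs"
      proof
        fix e assume "e \<in> {{x,y} | x y. x \<in> set xs \<and> D x y}"
        then obtain x y where e: "e = {x,y}" "x \<in> set xs" "D x y" by blast
        obtain i where i: "i < k" "x = xs!i" using e k_def by (metis in_set_conv_nth)
        have "y = xs!(Suc i mod k)" using F right_uniqueD[OF unique] e i k_def by blast
        thus "e \<in> cycle_edges xs" unfolding cycle_edges_def using e i k_def by blast
      qed
    qed
  next
    assume B: "\<forall>i<length xs. D (xs!(Suc i mod length xs)) (xs!i)"
    show ?thesis
    proof
      show "cycle_edges xs \<subseteq> {{x,y} | x y. x \<in> set xs \<and> D x y}"
      proof
        fix e assume "e \<in> cycle_edges xs"
        then obtain i where i: "i < k" "e = {xs!i, xs!(Suc i mod k)}" unfolding cycle_edges_def k_def by blast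
        have "xs!(Suc i mod k) \<in> set xs"
          using k3 nth_mem[of "Suc i mod k" xs] unfolding k_def[symmetric] by simp
        moreover have "e = {xs!(Suc i mod k), xs!i}" using i by blast
        ultimately show "e \<in> {{x,y} | x y. x \<in> set xs \<and> D x y}" using B i k_def by blast
      qed
      show "{{x,y} | x y. x \<in> set xs \<and> D x y} \<subseteq> cycle_edges xs"
      proof
        fix e assume "e \<in> {{x,y} | x y. x \<in> set xs \<and> D x y}"
        then obtain x y where e: "e = {x,y}" "x \<in> set xs" "D x y" by blast
        obtain i where i: "i < k" "x = xs!i" using e k_def by (metis in_set_conv_nth)
        define p where "p = (i+k-1) mod k"
        have pk: "p < k" using k3 p_def by simp
        have "y = xs!p" using backward_cycle_step[OF cyc orient unique B] right_uniqueD[OF unique] e i k_def p_def by blast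
        moreover have "Suc p mod k = i" using Suc_mod_pred_mod[of i k] i p_def by simp
        ultimately have "e = {xs!p, xs!(Suc p mod k)}" using e i by (simp add: insert_commute)
        thus "e \<in> cycle_edges xs" unfolding cycle_edges_def using pk k_def by blast
      qed
    qed
  qed
qed

text \<open>If every vertex has at most one out-neighbour, every cycle is directed and closed under \<open>D\<close>,
  and every vertex in the component of a cycle reaches it along \<open>D\<close>; so two cycles in one
  component have the same vertices.\<close>

lemma pseudoforest_if_right_unique_orientation:
  assumes g: "graph V E" and orient: "orientation E D"
    and unique: "right_unique D"
  shows "pseudoforest V E"
  unfolding pseudoforest_def
proof (intro allI impI, elim conjE)
  fix xs ys assume cx: "is_cycle V E xs" and cy: "is_cycle V E ys"
    and con: "connected_in V E (hd xs) (hd ys)"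
  define good where "good z \<longleftrightarrow> (\<exists>c\<in>set xs. D\<^sup>*\<^sup>* z c)" for z
  have ne: "xs \<noteq> []" "ys \<noteq> []" using is_cycleD[OF cx] is_cycleD[OF cy] by auto
  have r: "(\<lambda>x y. E x y \<and> x \<in> V \<and> y \<in> V)\<^sup>*\<^sup>* (hd xs) (hd ys)" using con unfolding connected_in_def by blast
  have "good (hd ys)"
    using r
  proof (induction rule: rtranclp_induct)
    case base thus ?case unfolding good_def using ne by auto
  next
    case (step y z)
    have e: "E y z" using step by blast
    from step.IH obtain c where c: "c \<in> set xs" "D\<^sup>*\<^sup>* y c" unfolding good_def by blast
    have "D y z \<or> D z y" using orient e unfolding orientation_def by blast
    thus ?case
    proof
      assume dzy: "D z y"
      thus ?thesis using c unfolding good_def by (meson converse_rtranclp_into_rtranclp)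
    next
      assume dyz: "D y z"
      show ?thesis
      proof (cases "y \<in> set xs")
        case True
        hence "z \<in> set xs" using cycle_closed[OF cx orient unique] dyz by blast
        thus ?thesis unfolding good_def by blast
      next
        case False
        hence "y \<noteq> c" using c by blast
        then obtain w where "D y w" "D\<^sup>*\<^sup>* w c" using c(2) by (metis converse_rtranclpE)
        hence "D\<^sup>*\<^sup>* z c" using right_uniqueD[OF unique] dyz by metis
        thus ?thesis using c unfolding good_def by blast
      qed
    qed
  qed
  then obtain c where c: "c \<in> set xs" "D\<^sup>*\<^sup>* (hd ys) c" unfolding good_def by blast
  have cy': "c \<in> set ys" using cycle_closed_rtranclp[OF cy orient unique c(2)] ne by simp
  have "set xs = set ys"
  proof
    show "set xs \<subseteq> set ys" using cycle_rtranclp[OF cx orient unique c(1)] cycle_closed_rtranclp[OF cy orient unique _ cy'] by blast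
    show "set ys \<subseteq> set xs" using cycle_rtranclp[OF cy orient unique cy'] cycle_closed_rtranclp[OF cx orient unique _ c(1)] by blast
  qed
  thus "cycle_edges xs = cycle_edges ys" using cycle_edges_right_unique[OF cx orient unique] cycle_edges_right_unique[OF cy orient unique] by simp
qed

text \<open>Lifting a cycle of \<open>H\<close> to \<open>K\<^sub>2 \<times> H\<close> with \<open>K\<^sub>2\<close> on \<open>c, c'\<close>: the first coordinate alternates, so a
  cycle of odd length has to be traversed twice.\<close>

definition cycle_lift :: "'a \<Rightarrow> 'a \<Rightarrow> 'b list \<Rightarrow> ('a \<times> 'b) list" where
  "cycle_lift c c' xs = map (\<lambda>j. (if even j then c else c', xs!(j mod length xs)))
     [0..<(if even (length xs) then length xs else 2 * length xs)]"

lemma length_cycle_lift: "length (cycle_lift c c' xs) = (if even (length xs) then length xs else 2 * length xs)"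
  unfolding cycle_lift_def by simp

lemma nth_cycle_lift: "j < length (cycle_lift c c' xs) \<Longrightarrow> cycle_lift c c' xs ! j = (if even j then c else c', xs!(j mod length xs))"
  unfolding cycle_lift_def by (simp del: upt_Suc)

lemma even_length_cycle_lift: "even (length (cycle_lift c c' xs))"
  unfolding length_cycle_lift by simp

lemma length_dvd_length_cycle_lift: "length xs dvd length (cycle_lift c c' xs)"
  unfolding length_cycle_lift by simp

lemma length_le_length_cycle_lift: "length xs \<le> length (cycle_lift c c' xs)"
  unfolding length_cycle_lift by simp

lemma is_cycle_lift:
  assumes cyc: "is_cycle V E xs" and cc: "c \<noteq> c'" "E1 c c'" "E1 c' c"
    and V': "V' = {c,c'} \<times> V" and E': "\<And>p q. E' p q \<longleftrightarrow> E1 (fst p) (fst q) \<and> E (snd p) (snd q)"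
  shows "is_cycle V' E' (cycle_lift c c' xs)"
proof -
  define k where "k = length xs"
  define L where "L = cycle_lift c c' xs"
  define n where "n = length L"
  have k3: "3 \<le> k" and dist: "distinct xs" and cE: "\<And>i. i < k \<Longrightarrow> E (xs!i) (xs!(Suc i mod k))"
    and sV: "set xs \<subseteq> V"
    using is_cycleD[OF cyc] k_def by auto
  have nk: "k \<le> n" "k dvd n" "even n" using length_le_length_cycle_lift length_dvd_length_cycle_lift even_length_cycle_lift k_def n_def L_def by metis+
  have nn: "n = (if even k then k else 2*k)" using length_cycle_lift n_def L_def k_def by metis
  have Lj: "\<And>j. j < n \<Longrightarrow> L!j = (if even j then c else c', xs!(j mod k))"
    using nth_cycle_lift n_def L_def k_def by metis
  have kp: "0 < k" using k3 by simp
  have "distinct L"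
  proof (subst distinct_conv_nth, intro allI impI)
    fix i j assume ij: "i < length L" "j < length L" "i \<noteq> j"
    show "L!i \<noteq> L!j"
    proof
      assume eq: "L!i = L!j"
      hence par: "even i = even j" and xe: "xs!(i mod k) = xs!(j mod k)"
        using Lj ij n_def cc(1) by (auto split: if_splits)
      have "i mod k = j mod k" using xe dist nth_eq_iff_index_eq kp k_def by (metis mod_less_divisor)
      show False
      proof (cases "even k")
        case True
        hence "i < k" "j < k" using ij n_def nn by auto
        thus False using \<open>i mod k = j mod k\<close> ij by simp
      next
        case False
        hence lt: "i < 2*k" "j < 2*k" using ij n_def nn by auto
        have "i = j \<or> i = j + k \<or> j = i + k"
        proof -
          have m2: "\<And>x. x < 2*k \<Longrightarrow> x mod k = (if x < k then x else x - k)"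
          proof -
            fix x assume x: "x < 2*k"
            show "x mod k = (if x < k then x else x - k)"
            proof (cases "x < k")
              case False
              hence "x mod k = (x - k) mod k" by (simp add: le_mod_geq)
              also have "\<dots> = x - k" using x False by simp
              finally show ?thesis using False by simp
            qed simp
          qed
          show ?thesis using m2[OF lt(1)] m2[OF lt(2)] \<open>i mod k = j mod k\<close> by (auto split: if_splits)
        qed
        thus False using ij(3) par False by auto
      qed
    qed
  qed
  moreover have "length L \<ge> 3" using nk k3 n_def by simp
  moreover have "set L \<subseteq> V'"
  proof
    fix p assume "p \<in> set L"
    then obtain j where j: "j < n" "p = L!j" using n_def by (metis in_set_conv_nth)
    have "xs!(j mod k) \<in> V" using sV kp k_def nth_mem mod_less_divisor by blast
    thus "p \<in> V'" using Lj[OF j(1)] j V' by auto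
  qed
  moreover have "\<forall>i < length L. E' (L!i) (L!(Suc i mod length L))"
  proof (intro allI impI)
    fix j assume j: "j < length L"
    have jn: "j < n" "Suc j mod n < n" using j n_def nk k3 by auto
    have s1: "(Suc j mod n) mod k = Suc (j mod k) mod k"
      using nk(2) by (simp add: mod_mod_cancel mod_Suc_eq)
    have ev: "even (Suc j mod n) \<longleftrightarrow> \<not> even j"
    proof (cases "Suc j < n")
      case True thus ?thesis by simp
    next
      case False
      hence sj: "Suc j = n" using jn by simp
      hence "odd j" using nk(3) by (metis even_Suc)
      thus ?thesis using sj by simp
    qed
    have f: "E1 (if even j then c else c') (if even (Suc j mod n) then c else c')"
      using ev cc by auto
    have "E (xs!(j mod k)) (xs!(Suc (j mod k) mod k))" using cE kp by simp
    thus "E' (L!j) (L!(Suc j mod length L))" using E' Lj[OF jn(1)] Lj[OF jn(2)] f s1 n_def by simp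
  qed
  ultimately show ?thesis unfolding is_cycle_def L_def by blast
qed

lemma cycle_edges_cycle_lift:
  assumes cyc: "is_cycle V E xs"
  shows "(\<lambda>e. snd ` e) ` cycle_edges (cycle_lift c c' xs) = cycle_edges xs"
proof -
  define k where "k = length xs"
  define L where "L = cycle_lift c c' xs"
  define n where "n = length L"
  have k3: "3 \<le> k" using is_cycleD[OF cyc] k_def by auto
  have kp: "0 < k" using k3 by simp
  have nk: "k \<le> n" "k dvd n" using length_le_length_cycle_lift length_dvd_length_cycle_lift k_def n_def L_def by metis+
  have Lj: "\<And>j. j < n \<Longrightarrow> snd (L!j) = xs!(j mod k)"
    using nth_cycle_lift n_def L_def k_def by (metis snd_conv)
  have np: "0 < n" using nk kp by simp
  have s1: "\<And>j. (Suc j mod n) mod k = Suc (j mod k) mod k"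
    using nk(2) by (simp add: mod_mod_cancel mod_Suc_eq)
  have im: "\<And>j. j < n \<Longrightarrow> snd ` {L!j, L!(Suc j mod n)} = {xs!(j mod k), xs!(Suc (j mod k) mod k)}"
    using Lj np s1 by simp
  show ?thesis
  proof
    show "(\<lambda>e. snd ` e) ` cycle_edges (cycle_lift c c' xs) \<subseteq> cycle_edges xs"
    proof
      fix e assume "e \<in> (\<lambda>e. snd ` e) ` cycle_edges (cycle_lift c c' xs)"
      then obtain j where j: "j < n" "e = snd ` {L!j, L!(Suc j mod n)}"
        unfolding cycle_edges_def L_def n_def by blast
      thus "e \<in> cycle_edges xs" using im[OF j(1)] kp unfolding cycle_edges_def k_def by auto
    qed
    show "cycle_edges xs \<subseteq> (\<lambda>e. snd ` e) ` cycle_edges (cycle_lift c c' xs)"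
    proof
      fix e assume "e \<in> cycle_edges xs"
      then obtain i where i: "i < k" "e = {xs!i, xs!(Suc i mod k)}" unfolding cycle_edges_def k_def by blast
      have "i < n" using i nk by simp
      moreover have "e = snd ` {L!i, L!(Suc i mod n)}" using im[OF \<open>i < n\<close>] i by simp
      ultimately show "e \<in> (\<lambda>e. snd ` e) ` cycle_edges (cycle_lift c c' xs)"
        unfolding cycle_edges_def L_def n_def by blast
    qed
  qed
qed

lemma hd_cycle_lift: "xs \<noteq> [] \<Longrightarrow> hd (cycle_lift c c' xs) = (c, hd xs)"
  unfolding cycle_lift_def by (simp add: hd_map hd_conv_nth upt_conv_Cons)

lemma pseudoforest_if_double_cover_pseudoforest:
  assumes gG: "graph V1 E1" and gH: "graph V2 E2" and ab: "E1 a b"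
    and pf: "pseudoforest ({a, b} \<times> V2) (\<lambda>p q. fst p \<in> {a, b} \<and> fst q \<in> {a, b} \<and> dprod_E E1 E2 p q)"
  shows "pseudoforest V2 E2"
proof -
  have ba: "E1 b a" using graph_sym[OF gG ab] .
  have anb: "a \<noteq> b" using ab graph_irrefl[OF gG] by metis
  define E1' where "E1' x y \<longleftrightarrow> x \<in> {a,b} \<and> y \<in> {a,b} \<and> E1 x y" for x y
  define V' where "V' = {a,b} \<times> V2"
  define E' where "E' p q \<longleftrightarrow> fst p \<in> {a, b} \<and> fst q \<in> {a, b} \<and> dprod_E E1 E2 p q" for p q
  have E'_iff: "E' p q \<longleftrightarrow> E1' (fst p) (fst q) \<and> E2 (snd p) (snd q)" for p q
    unfolding E'_def E1'_def by (auto simp: dprod_E_iff)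
  note pf = pf[folded V'_def E'_def]
  define oth where "oth c = (if c = a then b else a)" for c
  have oth: "\<And>c. c \<in> {a,b} \<Longrightarrow> oth c \<in> {a,b} \<and> c \<noteq> oth c \<and> E1' c (oth c) \<and> E1' (oth c) c"
    using ab ba anb unfolding oth_def E1'_def by auto
  have conn: "\<exists>c'\<in>{a,b}. (\<lambda>x y. E' x y \<and> x \<in> V' \<and> y \<in> V')\<^sup>*\<^sup>* (a,y) (c',z)"
    if r: "(\<lambda>x y. E2 x y \<and> x \<in> V2 \<and> y \<in> V2)\<^sup>*\<^sup>* y z" for y z
    using r
  proof (induction rule: rtranclp_induct)
    case base thus ?case by blast
  next
    case (step y' z)
    then obtain c' where c': "c' \<in> {a,b}" "(\<lambda>x y. E' x y \<and> x \<in> V' \<and> y \<in> V')\<^sup>*\<^sup>* (a,y) (c',y')" by blast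
    have "E' (c',y') (oth c', z)" using oth[OF c'(1)] step(2) unfolding E'_iff by simp
    moreover have "(c',y') \<in> V'" "(oth c', z) \<in> V'" using step(2) c'(1) oth[OF c'(1)] V'_def by auto
    ultimately have "(\<lambda>x y. E' x y \<and> x \<in> V' \<and> y \<in> V')\<^sup>*\<^sup>* (a,y) (oth c',z)"
      using c'(2) by (simp add: rtranclp.rtrancl_into_rtrancl)
    thus ?case using oth[OF c'(1)] by blast
  qed
  show ?thesis
    unfolding pseudoforest_def
  proof (intro allI impI, elim conjE)
    fix xs ys assume cx: "is_cycle V2 E2 xs" and cy: "is_cycle V2 E2 ys"
      and con: "connected_in V2 E2 (hd xs) (hd ys)"
    have ne: "xs \<noteq> []" "ys \<noteq> []" using is_cycleD[OF cx] is_cycleD[OF cy] by auto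
    obtain c' where c': "c' \<in> {a,b}" "(\<lambda>x y. E' x y \<and> x \<in> V' \<and> y \<in> V')\<^sup>*\<^sup>* (a, hd xs) (c', hd ys)"
      using conn con unfolding connected_in_def by blast
    have a1: "a \<in> {a,b}" by simp
    have seta: "{a, oth a} = {a,b}" using oth_def by auto
    have lx: "is_cycle V' E' (cycle_lift a (oth a) xs)"
      by (rule is_cycle_lift[OF cx]) (use oth[OF a1] seta V'_def E'_iff in auto)
    have setc: "{c', oth c'} = {a,b}" using c'(1) oth_def anb by auto
    have ly: "is_cycle V' E' (cycle_lift c' (oth c') ys)"
      by (rule is_cycle_lift[OF cy]) (use oth[OF c'(1)] setc V'_def E'_iff in auto)
    have "connected_in V' E' (hd (cycle_lift a (oth a) xs)) (hd (cycle_lift c' (oth c') ys))"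
      unfolding connected_in_def hd_cycle_lift[OF ne(1)] hd_cycle_lift[OF ne(2)]
      using con c' graph_edgeD[OF gH] unfolding connected_in_def V'_def by auto
    hence "cycle_edges (cycle_lift a (oth a) xs) = cycle_edges (cycle_lift c' (oth c') ys)"
      using pf lx ly unfolding pseudoforest_def by blast
    thus "cycle_edges xs = cycle_edges ys"
      using cycle_edges_cycle_lift[OF cx, of a "oth a"] cycle_edges_cycle_lift[OF cy, of c' "oth c'"] by metis
  qed
qed

lemma right_unique_double_cover_orientation:
  fixes a b :: 'a
  assumes gG: "graph V1 E1"
    and D: "orientation (dprod_E E1 E2) D" "one_perfect (dprod_E E1 E2) D"
  defines "D' \<equiv> \<lambda>p q. D p q \<and> fst p \<in> {a, b} \<and> fst q \<in> {a, b}"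
  shows "orientation (\<lambda>p q. fst p \<in> {a, b} \<and> fst q \<in> {a, b} \<and> dprod_E E1 E2 p q) D'"
    and "right_unique D'"
proof -
  show "orientation (\<lambda>p q. fst p \<in> {a, b} \<and> fst q \<in> {a, b} \<and> dprod_E E1 E2 p q) D'"
    using D(1) unfolding orientation_def D'_def by blast
  show "right_unique D'"
  proof (rule right_uniqueI, rule ccontr)
    fix v x y assume dx: "D' v x" and dy: "D' v y" and "x \<noteq> y"
    then have "E1 (fst x) (fst y)" using D(2) unfolding one_perfect_def D'_def dprod_E_iff by blast
    moreover have "E1 (fst v) (fst x)" "E1 (fst v) (fst y)"
      using dx dy D(1) unfolding D'_def orientation_def dprod_E_iff by blast+
    moreover have "fst v \<in> {a,b}" "fst x \<in> {a,b}" "fst y \<in> {a,b}" using dx dy D'_def by auto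
    ultimately show False using graph_irrefl[OF gG] by auto
  qed
qed

lemma pseudoforest_if_one_perfect_dprod:
  assumes gG: "graph V1 E1" and gH: "graph V2 E2"
    and D: "orientation (dprod_E E1 E2) D" "one_perfect (dprod_E E1 E2) D"
    and ab: "E1 a b"
  shows "pseudoforest V2 E2"
proof (rule pseudoforest_if_double_cover_pseudoforest[OF gG gH ab])
  have "graph ({a, b} \<times> V2) (\<lambda>p q. fst p \<in> {a, b} \<and> fst q \<in> {a, b} \<and> dprod_E E1 E2 p q)"
    using graph_finite[OF gH] graph_edgeD[OF gH] graph_sym[OF gG] graph_sym[OF gH] graph_irrefl[OF gG]
    unfolding graph_def by (auto simp: dprod_E_iff)
  then show "pseudoforest ({a, b} \<times> V2) (\<lambda>p q. fst p \<in> {a, b} \<and> fst q \<in> {a, b} \<and> dprod_E E1 E2 p q)"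
    using pseudoforest_if_right_unique_orientation right_unique_double_cover_orientation[OF gG D] by blast
qed

lemma successively_iff_nth:
  "successively P xs \<longleftrightarrow> (\<forall>i. Suc i < length xs \<longrightarrow> P (xs!i) (xs!Suc i))"
proof (induction P xs rule: successively.induct)
  case (3 P x y xs)
  then show ?case by (auto simp: nth_Cons split: nat.splits)
qed auto

lemma successively_nth: "successively E xs \<Longrightarrow> Suc i < length xs \<Longrightarrow> E (xs!i) (xs!Suc i)"
  unfolding successively_iff_nth by blast

definition induces_path_by :: "('a \<Rightarrow> 'a \<Rightarrow> bool) \<Rightarrow> 'a set \<Rightarrow> 'a list \<Rightarrow> bool" where
  "induces_path_by E S xs \<longleftrightarrow> xs \<noteq> [] \<and> distinct xs \<and> set xs = S \<and>
     (\<forall>u\<in>S. \<forall>v\<in>S. E u v \<longleftrightarrow>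
        (\<exists>i. Suc i < length xs \<and> ((u = xs!i \<and> v = xs!Suc i) \<or> (v = xs!i \<and> u = xs!Suc i))))"

lemma induces_path_iff_induces_path_by: "induces_path E S \<longleftrightarrow> (\<exists>xs. induces_path_by E S xs)"
  unfolding induces_path_def induces_path_by_def by blast

lemma linear_forest_position:
  assumes g: "graph V E" and lf: "linear_forest k V E"
  obtains pos where "\<And>u. u \<in> V \<Longrightarrow> pos u < k"
    and "\<And>u v. E u v \<Longrightarrow> pos v = Suc (pos u) \<or> pos u = Suc (pos v)"
    and "\<And>u v w. E u v \<Longrightarrow> E u w \<Longrightarrow> pos v = pos w \<Longrightarrow> v = w"
proof -
  obtain P where cover: "\<Union>P = V" and disjoint: "\<forall>S\<in>P. \<forall>T\<in>P. S \<noteq> T \<longrightarrow> S \<inter> T = {}"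
    and paths: "\<forall>S\<in>P. induces_path E S \<and> card S \<le> k"
    and no_edge: "\<forall>S\<in>P. \<forall>T\<in>P. S \<noteq> T \<longrightarrow> (\<forall>u\<in>S. \<forall>v\<in>T. \<not> E u v)"
    using lf unfolding linear_forest_def by (elim exE conjE) (rule that; assumption)
  define L where "L S = (SOME xs. induces_path_by E S xs)" for S
  have L: "induces_path_by E S (L S)" if "S \<in> P" for S
    using paths that unfolding L_def induces_path_iff_induces_path_by by (metis someI_ex)
  define pos where "pos u = (SOME i. \<exists>S\<in>P. u \<in> S \<and> i < length (L S) \<and> L S ! i = u)" for u
  have pos: "pos u < length (L S) \<and> L S ! pos u = u" if S: "S \<in> P" "u \<in> S" for u S
  proof -
    have "u \<in> set (L S)" using L[OF S(1)] S(2) unfolding induces_path_by_def by blast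
    then have "\<exists>i. \<exists>S\<in>P. u \<in> S \<and> i < length (L S) \<and> L S ! i = u"
      using S by (metis in_set_conv_nth)
    then have "\<exists>T\<in>P. u \<in> T \<and> pos u < length (L T) \<and> L T ! pos u = u"
      unfolding pos_def by (rule someI_ex)
    then obtain T where "T \<in> P" "u \<in> T" "pos u < length (L T)" "L T ! pos u = u" by blast
    moreover from this have "T = S" using disjoint S by blast
    ultimately show ?thesis by simp
  qed
  have part: "\<exists>S\<in>P. u \<in> S \<and> v \<in> S" if e: "E u v" for u v
  proof -
    obtain S T where "S \<in> P" "u \<in> S" "T \<in> P" "v \<in> T"
      using cover graph_edgeD[OF g e] by blast
    moreover from this have "S = T" using no_edge e by blast
    ultimately show ?thesis by blast
  qed
  show thesis
  proof
    fix u assume "u \<in> V"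
    then obtain S where S: "S \<in> P" "u \<in> S" using cover by blast
    have "length (L S) = card S" using L[OF S(1)] unfolding induces_path_by_def by (metis distinct_card)
    then show "pos u < k" using pos[OF S] paths S by fastforce
  next
    fix u v assume e: "E u v"
    then obtain S where S: "S \<in> P" "u \<in> S" "v \<in> S" using part by blast
    then obtain i where i: "Suc i < length (L S)"
      "(u = L S!i \<and> v = L S!Suc i) \<or> (v = L S!i \<and> u = L S!Suc i)"
      using e L[OF S(1)] unfolding induces_path_by_def by blast
    moreover have "distinct (L S)" using L[OF S(1)] unfolding induces_path_by_def by blast
    moreover note pos[OF S(1,2)] pos[OF S(1,3)]
    ultimately show "pos v = Suc (pos u) \<or> pos u = Suc (pos v)"
      by (metis Suc_lessD nth_eq_iff_index_eq)
  next
    fix u v w assume "E u v" "E u w" "pos v = pos w"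
    then obtain S T where "S \<in> P" "u \<in> S" "v \<in> S" "T \<in> P" "u \<in> T" "w \<in> T"
      using part by meson
    moreover from this have "S = T" using disjoint by blast
    ultimately show "v = w" using pos \<open>pos v = pos w\<close> by metis
  qed
qed

lemma linear_forest_1_edgeless:
  assumes g: "graph V E" and lf: "linear_forest 1 V E"
  shows "\<not> E u v"
proof
  assume e: "E u v"
  obtain pos where bound: "\<And>u. u \<in> V \<Longrightarrow> pos u < 1"
    and step: "\<And>u v. E u v \<Longrightarrow> pos v = Suc (pos u) \<or> pos u = Suc (pos v)"
    by (rule linear_forest_position[OF g lf]) blast
  show False using bound[of u] bound[of v] step[OF e] graph_edgeD[OF g e] by linarith
qed

lemma linear_forest_2_right_unique:
  assumes g: "graph V E" and lf: "linear_forest 2 V E"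
  shows "right_unique E"
proof (rule right_uniqueI)
  fix u v w assume e: "E u v" "E u w"
  obtain pos where bound: "\<And>u. u \<in> V \<Longrightarrow> pos u < 2"
    and step: "\<And>u v. E u v \<Longrightarrow> pos v = Suc (pos u) \<or> pos u = Suc (pos v)"
    and unique: "\<And>u v w. E u v \<Longrightarrow> E u w \<Longrightarrow> pos v = pos w \<Longrightarrow> v = w"
    by (rule linear_forest_position[OF g lf]) iprover
  have "pos v = pos w"
    using bound[of u] bound[of v] bound[of w] step[OF e(1)] step[OF e(2)]
      graph_edgeD[OF g e(1)] graph_edgeD[OF g e(2)] by linarith
  then show "v = w" using unique e by blast
qed

lemma successively_rtranclp_nth:
  assumes w: "successively E xs" and ij: "i \<le> j" "j < length xs"
  shows "E\<^sup>*\<^sup>* (xs!i) (xs!j)"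
  using ij
proof (induction j)
  case 0 thus ?case by simp
next
  case (Suc j)
  show ?case
  proof (cases "i = Suc j")
    case True thus ?thesis by simp
  next
    case False
    hence "E\<^sup>*\<^sup>* (xs!i) (xs!j)" using Suc by simp
    moreover have "E (xs!j) (xs!Suc j)" using w Suc.prems unfolding successively_iff_nth by simp
    ultimately show ?thesis by (rule rtranclp.rtrancl_into_rtrancl)
  qed
qed

lemma is_cycle_if_chord:
  assumes w: "successively E xs" and d: "distinct xs" and sV: "set xs \<subseteq> V"
    and s: "\<And>x y. E x y \<Longrightarrow> E y x"
    and ij: "i + 2 \<le> j" "j < length xs" and e: "E (xs!i) (xs!j)"
  shows "is_cycle V E (map (\<lambda>t. xs!(i+t)) [0..<j-i+1])"
proof -
  define cs where "cs = map (\<lambda>t. xs!(i+t)) [0..<j-i+1]"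
  define n where "n = j - i + 1"
  have ln: "length cs = n" unfolding cs_def n_def by simp
  have n3: "3 \<le> n" using ij n_def by simp
  have csn: "\<And>t. t < n \<Longrightarrow> cs!t = xs!(i+t)" unfolding cs_def n_def by (simp del: upt_Suc)
  have "distinct cs"
  proof -
    have "inj_on (\<lambda>t. xs!(i+t)) {0..<j-i+1}"
    proof (rule inj_onI)
      fix a b assume ab: "a \<in> {0..<j-i+1}" "b \<in> {0..<j-i+1}" "xs!(i+a) = xs!(i+b)"
      hence "i + a < length xs" "i + b < length xs" using ij by auto
      thus "a = b" using ab(3) d nth_eq_iff_index_eq by fastforce
    qed
    thus ?thesis unfolding cs_def by (simp add: distinct_map del: upt_Suc)
  qed
  moreover have "set cs \<subseteq> V" using sV ij unfolding cs_def by auto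
  moreover have "\<forall>t < length cs. E (cs!t) (cs!(Suc t mod length cs))"
  proof (intro allI impI)
    fix t assume t: "t < length cs"
    show "E (cs!t) (cs!(Suc t mod length cs))"
    proof (cases "Suc t < n")
      case True
      hence "Suc t mod length cs = Suc t" using ln by simp
      moreover have "E (xs!(i+t)) (xs!Suc (i+t))" using w True ij n_def unfolding successively_iff_nth by simp
      ultimately show ?thesis using csn[OF True] csn t ln True by simp
    next
      case False
      hence tt: "t = n - 1" "Suc t = n" using t ln by auto
      hence "Suc t mod length cs = 0" using ln by simp
      moreover have "cs!t = xs!j" using csn t ln tt ij n_def by simp
      moreover have "cs!0 = xs!i" using csn n3 by simp
      ultimately show ?thesis using s[OF e] by simp
    qed
  qed
  ultimately have "is_cycle V E cs" using n3 ln unfolding is_cycle_def by simp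
  thus ?thesis unfolding cs_def .
qed

lemma successive_if_acyclic:
  assumes w: "successively E xs" and d: "distinct xs" and sV: "set xs \<subseteq> V"
    and s: "\<And>x y. E x y \<Longrightarrow> E y x" and ir: "\<And>x. \<not> E x x"
    and acyc: "\<forall>cs. \<not> is_cycle V E cs"
    and ij: "i < length xs" "j < length xs" and e: "E (xs!i) (xs!j)"
  shows "j = Suc i \<or> i = Suc j"
proof -
  have "i \<noteq> j" using e ir by metis
  show ?thesis
  proof (rule ccontr)
    assume "\<not> (j = Suc i \<or> i = Suc j)"
    hence "i + 2 \<le> j \<or> j + 2 \<le> i" using \<open>i \<noteq> j\<close> by auto
    thus False
    proof
      assume "i + 2 \<le> j" thus False using is_cycle_if_chord[OF w d sV s _ ij(2) e] acyc by blast
    next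
      assume "j + 2 \<le> i" thus False using is_cycle_if_chord[OF w d sV s _ ij(1) s[OF e]] acyc by blast
    qed
  qed
qed

lemma ex_longest_distinct_list:
  assumes "finite V" "P xs\<^sub>0" "\<And>xs. P xs \<Longrightarrow> distinct xs \<and> set xs \<subseteq> V"
  obtains xs where "P xs" "\<And>ys. P ys \<Longrightarrow> length ys \<le> length xs"
proof -
  have "length xs < Suc (card V)" if "P xs" for xs
    using assms(3)[OF that] card_mono[OF assms(1), of "set xs"] by (simp add: distinct_card)
  then show thesis
    using ex_has_greatest_nat[of P xs\<^sub>0 length "Suc (card V)"] assms(2) that by blast
qed

lemma ex_longest_path_through:
  assumes "finite V" "v \<in> V"
  obtains xs where "distinct xs" "successively E xs" "v \<in> set xs" "set xs \<subseteq> V"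
    "\<And>ys. distinct ys \<Longrightarrow> successively E ys \<Longrightarrow> v \<in> set ys \<Longrightarrow> set ys \<subseteq> V \<Longrightarrow> length ys \<le> length xs"
proof -
  let ?path = "\<lambda>xs. distinct xs \<and> successively E xs \<and> v \<in> set xs \<and> set xs \<subseteq> V"
  obtain xs where "?path xs" "\<And>ys. ?path ys \<Longrightarrow> length ys \<le> length xs"
    by (rule ex_longest_distinct_list[OF assms(1), of ?path "[v]"]) (use assms(2) in auto)
  then show thesis using that by blast
qed

lemma longest_path_closed:
  assumes g: "graph V E"
    and deg: "\<forall>c x y z. E c x \<and> E c y \<and> E c z \<longrightarrow> x = y \<or> y = z \<or> x = z"
    and xs: "distinct xs" "successively E xs" "v \<in> set xs" "set xs \<subseteq> V"
    and longest: "\<And>ys. distinct ys \<Longrightarrow> successively E ys \<Longrightarrow> v \<in> set ys \<Longrightarrow> set ys \<subseteq> V \<Longrightarrow>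
      length ys \<le> length xs"
    and x: "x \<in> set xs" and e: "E x w"
  shows "w \<in> set xs"
proof (rule ccontr)
  assume w: "w \<notin> set xs"
  have sym: "\<And>x y. E x y \<Longrightarrow> E y x" using graph_sym[OF g] by blast
  have "w \<in> V" using graph_edgeD[OF g e] by simp
  have "xs \<noteq> []" using x by auto
  obtain i where i: "i < length xs" "x = xs!i" using x by (metis in_set_conv_nth)
  consider "i = 0" | "i = length xs - 1" | "0 < i" "Suc i < length xs"
    using i by linarith
  then show False
  proof cases
    case 1
    then have "successively E (w # xs)"
      using xs(2) sym[OF e] i \<open>xs \<noteq> []\<close> by (simp add: successively_Cons hd_conv_nth)
    then show False using longest[of "w # xs"] xs w \<open>w \<in> V\<close> by simp
  next
    case 2
    then have "successively E (xs @ [w])"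
      using xs(2) e i \<open>xs \<noteq> []\<close> by (simp add: successively_append_iff last_conv_nth)
    then show False using longest[of "xs @ [w]"] xs w \<open>w \<in> V\<close> by simp
  next
    case 3
    text \<open>Then \<open>x\<close> already has the two path neighbours \<open>xs!(i - 1)\<close> and \<open>xs!Suc i\<close>.\<close>
    have "E x (xs!Suc i)" "E x (xs!(i - 1))"
      using successively_nth[OF xs(2), of i] successively_nth[OF xs(2), of "i - 1"] 3 i sym by auto
    moreover have "xs!Suc i \<noteq> xs!(i - 1)" "xs!Suc i \<noteq> w" "xs!(i - 1) \<noteq> w"
      using xs(1) 3 w nth_mem[of "Suc i" xs] nth_mem[of "i - 1" xs] by (auto simp: nth_eq_iff_index_eq)
    ultimately show False using deg e by metis
  qed
qed

lemma component_eq_longest_path: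
  assumes g: "graph V E"
    and deg: "\<forall>c x y z. E c x \<and> E c y \<and> E c z \<longrightarrow> x = y \<or> y = z \<or> x = z"
    and xs: "distinct xs" "successively E xs" "v \<in> set xs" "set xs \<subseteq> V"
    and longest: "\<And>ys. distinct ys \<Longrightarrow> successively E ys \<Longrightarrow> v \<in> set ys \<Longrightarrow> set ys \<subseteq> V \<Longrightarrow>
      length ys \<le> length xs"
  shows "{w. E\<^sup>*\<^sup>* v w} = set xs"
proof
  have "symp E\<^sup>*\<^sup>*" using graph_sym[OF g] by (intro symp_rtranclp) (auto intro: sympI)
  moreover have "E\<^sup>*\<^sup>* (xs!i) (xs!j)" if "i \<le> j" "j < length xs" for i j
    using successively_rtranclp_nth[OF xs(2) that] .
  ultimately have "E\<^sup>*\<^sup>* x y" if "x \<in> set xs" "y \<in> set xs" for x y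
    using that by (metis in_set_conv_nth nat_le_linear sympD)
  then show "set xs \<subseteq> {w. E\<^sup>*\<^sup>* v w}" using xs(3) by blast
  show "{w. E\<^sup>*\<^sup>* v w} \<subseteq> set xs"
  proof
    fix w assume "w \<in> {w. E\<^sup>*\<^sup>* v w}"
    then have "E\<^sup>*\<^sup>* v w" by simp
    then show "w \<in> set xs"
      by (induction rule: rtranclp_induct)
        (use xs(3) longest_path_closed[OF g deg xs longest] in blast)+
  qed
qed

lemma induces_path_by_if_acyclic:
  assumes g: "graph V E" and acyclic: "\<forall>cs. \<not> is_cycle V E cs"
    and xs: "distinct xs" "successively E xs" "set xs \<subseteq> V" "xs \<noteq> []"
  shows "induces_path_by E (set xs) xs"
  unfolding induces_path_by_def
proof (intro conjI ballI iffI)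
  fix u w assume uw: "u \<in> set xs" "w \<in> set xs"
  then obtain i j where ij: "i < length xs" "j < length xs" "u = xs!i" "w = xs!j"
    by (metis in_set_conv_nth)
  {
    assume "E u w"
    then have "j = Suc i \<or> i = Suc j"
      using successive_if_acyclic[OF xs(2,1,3) _ _ acyclic ij(1,2)] graph_sym[OF g] graph_irrefl[OF g] ij
      by blast
    then show "\<exists>i. Suc i < length xs \<and> (u = xs!i \<and> w = xs!Suc i \<or> w = xs!i \<and> u = xs!Suc i)"
      using ij by blast
  next
    assume "\<exists>i. Suc i < length xs \<and> (u = xs!i \<and> w = xs!Suc i \<or> w = xs!i \<and> u = xs!Suc i)"
    then show "E u w" using successively_nth[OF xs(2)] graph_sym[OF g] by blast
  }
qed (use xs in auto)

text \<open>The parts of the linear forest are the connected components, each of which is the vertex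
  set of a longest path through any of its vertices.\<close>

lemma linear_forestI:
  assumes g: "graph V E" and "1 \<le> k"
    and deg: "\<forall>c x y z. E c x \<and> E c y \<and> E c z \<longrightarrow> x = y \<or> y = z \<or> x = z"
    and acyclic: "\<forall>cs. \<not> is_cycle V E cs"
    and short: "\<forall>xs. distinct xs \<and> successively E xs \<longrightarrow> length xs \<le> k"
  shows "linear_forest k V E"
proof -
  define comp where "comp v = {w. E\<^sup>*\<^sup>* v w}" for v
  have comp_path: "induces_path E (comp v) \<and> card (comp v) \<le> k \<and> comp v \<subseteq> V" if v: "v \<in> V" for v
  proof -
    obtain xs where xs: "distinct xs" "successively E xs" "v \<in> set xs" "set xs \<subseteq> V"
      and longest: "\<And>ys. distinct ys \<Longrightarrow> successively E ys \<Longrightarrow> v \<in> set ys \<Longrightarrow> set ys \<subseteq> V \<Longrightarrow>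
        length ys \<le> length xs"
      using ex_longest_path_through[OF graph_finite[OF g] v] by blast
    have "comp v = set xs"
      unfolding comp_def by (rule component_eq_longest_path[OF g deg xs longest])
    moreover have "induces_path_by E (set xs) xs"
      using induces_path_by_if_acyclic[OF g acyclic xs(1,2,4)] xs(3) by (cases xs) auto
    ultimately show ?thesis
      using short xs by (auto simp: induces_path_iff_induces_path_by distinct_card)
  qed
  have "symp E\<^sup>*\<^sup>*" using graph_sym[OF g] by (intro symp_rtranclp) (auto intro: sympI)
  then have comp_eq: "comp w = comp v" if "w \<in> comp v" for v w
    using that unfolding comp_def by (auto intro: rtranclp_trans dest: sympD)
  have self: "v \<in> comp v" for v unfolding comp_def by simp
  have comp_edge: "u' \<in> comp v" if "E u u'" "u \<in> comp v" for u u' v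
    using that unfolding comp_def by (simp add: rtranclp.rtrancl_into_rtrancl)
  show ?thesis
    unfolding linear_forest_def
  proof (rule exI[of _ "comp ` V"], intro conjI)
    show "\<Union> (comp ` V) = V" using comp_path self by blast
    show "\<forall>S\<in>comp ` V. S \<noteq> {}" using self by blast
    show "\<forall>S\<in>comp ` V. \<forall>T\<in>comp ` V. S \<noteq> T \<longrightarrow> S \<inter> T = {}"
      using comp_eq by blast
    show "\<forall>S\<in>comp ` V. induces_path E S \<and> card S \<le> k" using comp_path by blast
    show "\<forall>S\<in>comp ` V. \<forall>T\<in>comp ` V. S \<noteq> T \<longrightarrow> (\<forall>u\<in>S. \<forall>v\<in>T. \<not> E u v)"
      using comp_eq comp_edge by blast
  qed
qed

lemma successively_set_subset:
  assumes g: "graph V E" and w: "successively E xs" and l: "2 \<le> length xs"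
  shows "set xs \<subseteq> V"
proof
  fix x assume "x \<in> set xs"
  then obtain t where t: "t < length xs" "x = xs!t" by (metis in_set_conv_nth)
  show "x \<in> V"
  proof (cases "Suc t < length xs")
    case True thus ?thesis using graph_edgeD[OF g successively_nth[OF w True]] t by simp
  next
    case False
    hence "Suc (t-1) < length xs" "Suc (t-1) = t" using t l by auto
    thus ?thesis using graph_edgeD[OF g successively_nth[OF w, of "t-1"]] t by simp
  qed
qed

lemma no_chord_if_acyclic:
  assumes g: "graph V E" and acyc: "\<forall>cs. \<not> is_cycle V E cs" and d: "distinct xs" and w: "successively E xs"
    and i: "i + 2 < length xs"
  shows "\<not> E (xs!i) (xs!(i+2))"
proof
  assume e: "E (xs!i) (xs!(i+2))"
  have "set xs \<subseteq> V" using successively_set_subset[OF g w] i by simp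
  thus False using is_cycle_if_chord[OF w d _ _ _ i e, of V] graph_sym[OF g] acyc by auto
qed

lemma linear_forest_1_if_edgeless:
  assumes g: "graph V E" and ne: "\<forall>a b. \<not> E a b"
  shows "linear_forest 1 V E"
proof (rule linear_forestI[OF g])
  show "\<forall>c x y z. E c x \<and> E c y \<and> E c z \<longrightarrow> x = y \<or> y = z \<or> x = z" using ne by blast
  show "\<forall>cs. \<not> is_cycle V E cs"
  proof (intro allI notI)
    fix cs assume "is_cycle V E cs"
    hence "E (cs!0) (cs!(Suc 0 mod length cs))" by (rule is_cycleD(3)) (use is_cycleD(1)[OF \<open>is_cycle V E cs\<close>] in \<open>cases cs; auto\<close>)
    thus False using ne by blast
  qed
  show "\<forall>xs. distinct xs \<and> successively E xs \<longrightarrow> length xs \<le> 1"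
  proof (intro allI impI)
    fix xs assume a: "distinct xs \<and> successively E xs"
    show "length xs \<le> 1"
    proof (rule ccontr)
      assume "\<not> length xs \<le> 1"
      hence "Suc 0 < length xs" by simp
      thus False using successively_nth[of E xs 0] a ne by blast
    qed
  qed
qed simp

lemma linear_forest_2_if_right_unique:
  assumes g: "graph V E" and "right_unique E"
  shows "linear_forest 2 V E"
proof (rule linear_forestI[OF g])
  have u: "\<forall>m x y. E m x \<longrightarrow> E m y \<longrightarrow> x = y"
    using \<open>right_unique E\<close> by (simp add: right_unique_def)
  have s: "\<And>x y. E x y \<Longrightarrow> E y x" using graph_sym[OF g] by blast
  show "\<forall>c x y z. E c x \<and> E c y \<and> E c z \<longrightarrow> x = y \<or> y = z \<or> x = z" using u by blast
  show "\<forall>cs. \<not> is_cycle V E cs"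
  proof (intro allI notI)
    fix cs assume c: "is_cycle V E cs"
    have l: "3 \<le> length cs" "distinct cs" using c unfolding is_cycle_def by auto
    have a1: "E (cs!0) (cs!(Suc 0 mod length cs))" by (rule is_cycleD(3)[OF c]) (use l in \<open>cases cs; auto\<close>)
    have a2: "E (cs!1) (cs!(Suc 1 mod length cs))" by (rule is_cycleD(3)[OF c]) (use l in \<open>cases cs; auto\<close>)
    have m: "Suc 0 mod length cs = 1" "Suc 1 mod length cs = 2" using l by auto
    have "E (cs!0) (cs!1)" using a1 m(1) by metis
    moreover have "E (cs!1) (cs!2)" using a2 m(2) by metis
    ultimately have "E (cs!1) (cs!0)" "E (cs!1) (cs!2)" using s by auto
    hence "cs!0 = cs!2" using u by blast
    thus False using l nth_eq_iff_index_eq by fastforce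
  qed
  show "\<forall>xs. distinct xs \<and> successively E xs \<longrightarrow> length xs \<le> 2"
  proof (intro allI impI)
    fix xs assume a: "distinct xs \<and> successively E xs"
    show "length xs \<le> 2"
    proof (rule ccontr)
      assume "\<not> length xs \<le> 2"
      hence l: "2 < length xs" by simp
      have "E (xs!0) (xs!1)" using successively_nth[of E xs 0] a l by simp
      moreover have "E (xs!1) (xs!2)" using successively_nth[of E xs 1] a l by (simp add: numeral_2_eq_2)
      ultimately have "E (xs!1) (xs!0)" "E (xs!1) (xs!2)" using s by auto
      hence "xs!0 = xs!2" using u by blast
      thus False using a l nth_eq_iff_index_eq by fastforce
    qed
  qed
qed simp

definition partial_orientation :: "('a \<Rightarrow> 'a \<Rightarrow> bool) \<Rightarrow> ('a \<Rightarrow> 'a \<Rightarrow> bool) \<Rightarrow> bool" where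
  "partial_orientation E D \<longleftrightarrow> (\<forall>x y. D x y \<longrightarrow> E x y) \<and> (\<forall>x y. D x y \<longrightarrow> \<not> D y x) \<and> right_unique D"

lemma partial_orientation_reverse_path:
  assumes D: "partial_orientation E D" and sym: "\<And>x y. E x y \<Longrightarrow> E y x"
    and xs: "distinct xs" "successively D xs" and sink: "\<And>y. \<not> D (last xs) y"
  defines "D' \<equiv> \<lambda>x y. (x \<notin> set xs \<and> D x y) \<or> (\<exists>k<length xs. 0 < k \<and> x = xs!k \<and> y = xs!(k - 1))"
  shows "partial_orientation E D'" and "\<And>x y. D x y \<Longrightarrow> D' x y \<or> D' y x"
    and "\<And>y. xs \<noteq> [] \<Longrightarrow> \<not> D' (hd xs) y"
proof -
  have DE: "\<And>x y. D x y \<Longrightarrow> E x y" and asym: "\<And>x y. D x y \<Longrightarrow> \<not> D y x" and "right_unique D"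
    using D unfolding partial_orientation_def by blast+
  have step: "D (xs!(k - 1)) (xs!k)" if "0 < k" "k < length xs" for k
    using successively_nth[OF xs(2), of "k - 1"] that by simp
  have D'_in: "D' (xs!k) y \<longleftrightarrow> 0 < k \<and> y = xs!(k - 1)" if "k < length xs" for k y
  proof -
    have "xs!k = xs!k' \<longleftrightarrow> k = k'" if "k' < length xs" for k'
      using xs(1) \<open>k < length xs\<close> that by (simp add: nth_eq_iff_index_eq)
    then show ?thesis using that unfolding D'_def by auto
  qed
  have D'_out: "D' x y \<longleftrightarrow> D x y" if "x \<notin> set xs" for x y
    using that unfolding D'_def by auto
  show "partial_orientation E D'"
    unfolding partial_orientation_def
  proof (intro conjI allI impI right_uniqueI)
    fix x y assume "D' x y"
    then show "E x y"
      unfolding D'_def using step DE sym by blast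
  next
    fix x y assume "D' x y"
    then consider "x \<notin> set xs" "D x y" | k where "k < length xs" "0 < k" "x = xs!k" "y = xs!(k - 1)"
      unfolding D'_def by blast
    then show "\<not> D' y x"
    proof cases
      case 1
      show ?thesis
      proof (cases "y \<in> set xs")
        case True
        then obtain k where "k < length xs" "y = xs!k" by (metis in_set_conv_nth)
        then show ?thesis using D'_in 1(1) by auto
      qed (use 1 D'_out asym in blast)
    next
      case 2
      then have "k - 1 < length xs" "xs!(k - 1 - 1) \<noteq> xs!k"
        using xs(1) by (auto simp: nth_eq_iff_index_eq)
      then show ?thesis using D'_in 2 by auto
    qed
  next
    fix x y z assume "D' x y" "D' x z"
    then show "y = z"
    proof (cases "x \<in> set xs")
      case True
      then obtain k where "k < length xs" "x = xs!k" by (metis in_set_conv_nth)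
      then show ?thesis using D'_in \<open>D' x y\<close> \<open>D' x z\<close> by simp
    next
      case False
      then show ?thesis
        using D'_out \<open>D' x y\<close> \<open>D' x z\<close> right_uniqueD[OF \<open>right_unique D\<close>] by blast
    qed
  qed
  show "D' x y \<or> D' y x" if "D x y" for x y
  proof (cases "x \<in> set xs")
    case True
    then obtain k where k: "k < length xs" "x = xs!k" by (metis in_set_conv_nth)
    have "Suc k < length xs"
    proof (rule ccontr)
      assume "\<not> Suc k < length xs"
      with k have "k = length xs - 1" "xs \<noteq> []" by auto
      then have "x = last xs" using k by (simp add: last_conv_nth)
      then show False using sink that by blast
    qed
    then have "y = xs!Suc k"
      using step[of "Suc k"] k that right_uniqueD[OF \<open>right_unique D\<close>] by simp
    then show ?thesis using D'_in[of "Suc k" x] k \<open>Suc k < length xs\<close> by simp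
  next
    case False
    then show ?thesis using D'_out that by blast
  qed
  show "\<not> D' (hd xs) y" if "xs \<noteq> []" for y
    using D'_in[of 0 y] that by (simp add: hd_conv_nth)
qed

lemma partial_orientation_add_edge:
  assumes D: "partial_orientation E D" and "E u v" "u \<noteq> v" "\<And>y. \<not> D u y" "\<not> D v u"
  shows "partial_orientation E (\<lambda>x y. D x y \<or> x = u \<and> y = v)"
proof -
  have "\<forall>x y. D x y \<longrightarrow> E x y" "\<forall>x y. D x y \<longrightarrow> \<not> D y x" "\<forall>x y z. D x y \<longrightarrow> D x z \<longrightarrow> y = z"
    using D unfolding partial_orientation_def right_unique_def by blast+
  then show ?thesis
    using assms(2-5) unfolding partial_orientation_def right_unique_def by metis
qed

lemma partial_orientation_extend_along_path_to_sink:
  assumes D: "partial_orientation E D" and sym: "\<And>x y. E x y \<Longrightarrow> E y x"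
    and xs: "distinct xs" "successively D xs" "xs \<noteq> []" "hd xs = u" and sink: "\<And>y. \<not> D (last xs) y"
    and e: "E u v" "u \<noteq> v" "\<not> D u v" "\<not> D v u"
  shows "\<exists>D'. partial_orientation E D' \<and> (\<forall>x y. D x y \<longrightarrow> D' x y \<or> D' y x) \<and> D' u v"
proof -
  define D1 where "D1 x y \<longleftrightarrow>
    (x \<notin> set xs \<and> D x y) \<or> (\<exists>k<length xs. 0 < k \<and> x = xs!k \<and> y = xs!(k - 1))" for x y
  note reversed = partial_orientation_reverse_path[OF D sym xs(1,2) sink, folded D1_def]
  have u: "u = xs!0" using xs(3,4) by (simp add: hd_conv_nth)
  have "\<not> D1 v u"
  proof
    assume "D1 v u"
    then obtain k where k: "k < length xs" "0 < k" "v = xs!k" "u = xs!(k - 1)"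
      using e(4) u xs(3) unfolding D1_def by (metis length_greater_0_conv nth_mem)
    then have "k - 1 = 0" using u xs(3) nth_eq_iff_index_eq[OF xs(1), of 0 "k - 1"] by simp
    then have "k = 1" using k(2) by simp
    then show False using successively_nth[OF xs(2), of 0] k u e(3) by simp
  qed
  then have "partial_orientation E (\<lambda>x y. D1 x y \<or> x = u \<and> y = v)"
    using partial_orientation_add_edge[OF reversed(1) e(1,2)] reversed(3) xs(3,4) by blast
  then show ?thesis using reversed(2) by blast
qed

lemma ex_maximal_directed_path:
  assumes fin: "finite V" and u: "u \<in> V" and DV: "\<And>x y. D x y \<Longrightarrow> y \<in> V"
  obtains xs where "distinct xs" "successively D xs" "xs \<noteq> []" "hd xs = u" "set xs \<subseteq> V"
    "\<forall>y. D (last xs) y \<longrightarrow> y \<in> set xs"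
proof -
  let ?path = "\<lambda>xs. distinct xs \<and> successively D xs \<and> xs \<noteq> [] \<and> hd xs = u \<and> set xs \<subseteq> V"
  obtain xs where xs: "?path xs" and longest: "\<And>ys. ?path ys \<Longrightarrow> length ys \<le> length xs"
    by (rule ex_longest_distinct_list[OF fin, of ?path "[u]"]) (use u in auto)
  have "y \<in> set xs" if "D (last xs) y" for y
  proof (rule ccontr)
    assume "y \<notin> set xs"
    then have "?path (xs @ [y])"
      using xs that DV[OF that] by (auto simp: successively_append_iff)
    then show False using longest by fastforce
  qed
  with xs show thesis using that by blast
qed

lemma is_cycle_drop_if_closing_edge:
  assumes por: "partial_orientation E D" and xs: "distinct xs" "successively D xs" "xs \<noteq> []" "set xs \<subseteq> V"
    and a: "a < length xs" "D (last xs) (xs!a)"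
  shows "is_cycle V E (drop a xs) \<and> (\<forall>t < length (drop a xs). D (drop a xs!t) (drop a xs!(Suc t mod length (drop a xs))))"
proof -
  define cs where "cs = drop a xs"
  define n where "n = length xs"
  define l where "l = length cs"
  have DE: "\<And>x y. D x y \<Longrightarrow> E x y" and Das: "\<And>x y. D x y \<Longrightarrow> \<not> D y x"
    using por unfolding partial_orientation_def by blast+
  have ln: "l = n - a" unfolding l_def cs_def n_def by simp
  have csn: "\<And>t. t < l \<Longrightarrow> cs!t = xs!(a+t)" unfolding cs_def l_def using a(1) by simp
  have lastn: "last xs = xs!(n-1)" using xs(3) n_def by (simp add: last_conv_nth)
  have wk: "\<And>m. Suc m < n \<Longrightarrow> D (xs!m) (xs!Suc m)" using xs(2) n_def unfolding successively_iff_nth by blast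
  have l3: "3 \<le> l"
  proof (rule ccontr)
    assume "\<not> 3 \<le> l"
    hence "l = 1 \<or> l = 2" using ln a(1) n_def by auto
    thus False
    proof
      assume "l = 1"
      hence "a = n - 1" using ln a(1) n_def by simp
      thus False using a(2) lastn DE Das by metis
    next
      assume "l = 2"
      hence an: "Suc a = n - 1" "Suc a < n" using ln a(1) n_def by auto
      hence "D (xs!a) (last xs)" using wk lastn by metis
      thus False using a(2) Das by blast
    qed
  qed
  have Dc: "\<forall>t < l. D (cs!t) (cs!(Suc t mod l))"
  proof (intro allI impI)
    fix t assume t: "t < l"
    show "D (cs!t) (cs!(Suc t mod l))"
    proof (cases "Suc t < l")
      case True
      hence "cs!(Suc t mod l) = xs!(Suc (a+t))" using csn by simp
      moreover have "Suc (a + t) < n" using True ln by simp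
      ultimately show ?thesis using wk csn[OF t] by simp
    next
      case False
      hence "Suc t = l" using t by simp
      hence at: "a + t = n - 1" using ln by simp
      have "cs!(Suc t mod l) = xs!a" using \<open>Suc t = l\<close> csn l3 by simp
      moreover have "cs!t = last xs" using csn[OF t] at lastn by simp
      ultimately show ?thesis using a(2) by simp
    qed
  qed
  have "is_cycle V E cs"
    unfolding is_cycle_def
  proof (intro conjI)
    show "3 \<le> length cs" using l3 l_def by simp
    show "distinct cs" using xs(1) cs_def by simp
    show "set cs \<subseteq> V" using xs(4) cs_def by (meson in_set_dropD subset_iff)
    show "\<forall>i<length cs. E (cs!i) (cs!(Suc i mod length cs))" using Dc DE l_def by blast
  qed
  thus ?thesis using Dc cs_def l_def by simp
qed

lemma Union_cycle_edges:
  assumes "is_cycle V E cs"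
  shows "\<Union> (cycle_edges cs) = set cs"
proof
  have l: "0 < length cs" using assms unfolding is_cycle_def by linarith
  show "\<Union> (cycle_edges cs) \<subseteq> set cs" unfolding cycle_edges_def using l by auto
  show "set cs \<subseteq> \<Union> (cycle_edges cs)"
  proof
    fix x assume "x \<in> set cs"
    then obtain i where "i < length cs" "x = cs!i" by (metis in_set_conv_nth)
    thus "x \<in> \<Union> (cycle_edges cs)" unfolding cycle_edges_def by blast
  qed
qed

lemma connected_in_sym:
  assumes "graph V E" "connected_in V E x y"
  shows "connected_in V E y x"
proof -
  have "symp (\<lambda>x y. E x y \<and> x \<in> V \<and> y \<in> V)"
    using graph_sym[OF assms(1)] by (auto intro: sympI)
  then show ?thesis
    using assms(2) unfolding connected_in_def by (blast intro: symp_rtranclp[THEN sympD])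
qed

lemma connected_in_trans:
  "connected_in V E x y \<Longrightarrow> connected_in V E y z \<Longrightarrow> connected_in V E x z"
  unfolding connected_in_def by (blast intro: rtranclp_trans)

lemma connected_in_edge: "graph V E \<Longrightarrow> E x y \<Longrightarrow> connected_in V E x y"
  unfolding connected_in_def by (auto dest: graph_edgeD)

lemma connected_in_path:
  assumes g: "graph V E" and zs: "successively E zs" "set zs \<subseteq> V" and "j < length zs"
  shows "connected_in V E (zs!0) (zs!j)"
proof -
  have "successively (\<lambda>x y. E x y \<and> x \<in> V \<and> y \<in> V) zs"
    using zs unfolding successively_iff_nth by (simp add: subset_iff)
  moreover have "0 < length zs" using \<open>j < length zs\<close> by linarith
  then have "zs!0 \<in> set zs" "zs!j \<in> set zs" using \<open>j < length zs\<close> by simp_all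
  then have "zs!0 \<in> V" "zs!j \<in> V" using zs(2) by auto
  ultimately show ?thesis
    using successively_rtranclp_nth[of _ zs 0 j] \<open>j < length zs\<close> unfolding connected_in_def by blast
qed

lemma distinct_join_paths:
  assumes xs: "distinct xs" and ys: "distinct ys" and i: "i < length xs" "xs!i = ys!j" and j: "j < length ys"
    and first: "\<And>j'. j' < j \<Longrightarrow> ys!j' \<notin> set xs"
  shows "distinct (map (\<lambda>t. if t \<le> i then xs!t else ys!(i + j - t)) [0..<i + j + 1])"
proof -
  define f where "f t = (if t \<le> i then xs!t else ys!(i+j-t))" for t
  have "inj_on f {0..<i+j+1}"
  proof (rule inj_onI)
    fix t1 t2 assume t: "t1 \<in> {0..<i+j+1}" "t2 \<in> {0..<i+j+1}" "f t1 = f t2"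
    have on_xs: "t1 = t2" if "t1 \<le> i" "t2 \<le> i" "f t1 = f t2" for t1 t2
      using that f_def i(1) xs(1) nth_eq_iff_index_eq by fastforce
    have on_ys: "t1 = t2" if "\<not> t1 \<le> i" "\<not> t2 \<le> i" "t1 < i+j+1" "t2 < i+j+1" "f t1 = f t2" for t1 t2
    proof -
      have "i+j-t1 < length ys" "i+j-t2 < length ys" using that j(1) by auto
      hence "i+j-t1 = i+j-t2" using that f_def ys(1) nth_eq_iff_index_eq by fastforce
      thus ?thesis using that by simp
    qed
    have across: "False" if "t1 \<le> i" "\<not> t2 \<le> i" "t2 < i+j+1" "f t1 = f t2" for t1 t2
    proof -
      have "i+j-t2 < j" using that by simp
      hence "ys!(i+j-t2) \<notin> set xs" using first by blast
      moreover have "ys!(i+j-t2) = xs!t1" using that f_def by simp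
      ultimately show False using that i(1) by simp
    qed
    show "t1 = t2" using on_xs on_ys across t by (metis atLeastLessThan_iff)
  qed
  then show ?thesis unfolding f_def[abs_def] by (simp add: distinct_map del: upt_Suc)
qed

lemma is_cycle_join_paths:
  assumes s: "\<And>x y. E x y \<Longrightarrow> E y x"
    and xs: "distinct xs" "successively E xs" "set xs \<subseteq> V"
    and ys: "distinct ys" "successively E ys" "set ys \<subseteq> V"
    and i: "i < length xs" "xs!i = ys!j" and j: "j < length ys"
    and first: "\<And>j'. j' < j \<Longrightarrow> ys!j' \<notin> set xs"
    and u0: "xs!0 = u" and v0: "ys!0 = v" and edge: "E u v" and long: "2 \<le> i + j"
  defines "NC \<equiv> map (\<lambda>t. if t \<le> i then xs!t else ys!(i + j - t)) [0..<i + j + 1]"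
  shows "is_cycle V E NC" "{u, v} \<in> cycle_edges NC"
proof -
  define f where "f t = (if t \<le> i then xs!t else ys!(i+j-t))" for t
  have NC_eq: "NC = map f [0..<i+j+1]" unfolding NC_def f_def by simp
  define l where "l = i + j + 1"
  have lNC: "length NC = l" unfolding NC_eq l_def by simp
  have NCn: "\<And>t. t < l \<Longrightarrow> NC!t = f t" unfolding NC_eq l_def by (simp del: upt_Suc)
  have wkx: "\<And>m. Suc m < length xs \<Longrightarrow> E (xs!m) (xs!Suc m)" using xs(2) unfolding successively_iff_nth by blast
  have wky: "\<And>m. Suc m < length ys \<Longrightarrow> E (ys!m) (ys!Suc m)" using ys(2) unfolding successively_iff_nth by blast
  have l3: "3 \<le> l" using long l_def by simp
  have dNC: "distinct NC"
    unfolding NC_def by (rule distinct_join_paths[OF xs(1) ys(1) i j first])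
  have fV: "\<And>t. t < l \<Longrightarrow> f t \<in> V"
    using xs(3) ys(3) i(1) j(1) unfolding f_def l_def by (auto simp: subset_iff)
  have sNC: "set NC \<subseteq> V" using fV lNC NCn by (metis in_set_conv_nth subsetI)
  have fj: "\<And>t. i \<le> t \<Longrightarrow> t < l \<Longrightarrow> f t = ys!(i+j-t)"
    using i(2) unfolding f_def by auto
  have eNC: "\<forall>t < length NC. E (NC!t) (NC!(Suc t mod length NC))"
  proof (intro allI impI)
    fix t assume t: "t < length NC"
    show "E (NC!t) (NC!(Suc t mod length NC))"
    proof (cases "Suc t < l")
      case True
      hence m: "Suc t mod length NC = Suc t" using lNC by simp
      show ?thesis
      proof (cases "t < i")
        case True
        hence "E (xs!t) (xs!Suc t)" using wkx i(1) by simp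
        moreover have "NC!t = xs!t" "NC!Suc t = xs!Suc t" using NCn True \<open>Suc t < l\<close> t lNC f_def by auto
        ultimately show ?thesis using m by simp
      next
        case False
        define r where "r = i + j - Suc t"
        have rr: "Suc r = i + j - t" "Suc r < length ys" using r_def False \<open>Suc t < l\<close> l_def j(1) by auto
        have "E (ys!r) (ys!Suc r)" using wky rr(2) by blast
        moreover have "NC!t = ys!Suc r" using NCn t lNC fj False rr(1) by simp
        moreover have "NC!Suc t = ys!r" using NCn \<open>Suc t < l\<close> fj False r_def by simp
        ultimately show ?thesis using m s by simp
      qed
    next
      case False
      hence tl: "t = i + j" using t lNC l_def by simp
      hence "Suc t mod length NC = 0" using lNC l_def by simp
      moreover have "NC!0 = u" using NCn l3 f_def u0 by simp
      moreover have "NC!t = v"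
      proof (cases "j = 0")
        case True thus ?thesis using NCn t lNC tl f_def i(2) v0 by simp
      next
        case False thus ?thesis using NCn t lNC tl fj[of t] v0 l_def by simp
      qed
      ultimately show ?thesis using s[OF edge] by simp
    qed
  qed
  show "is_cycle V E NC" unfolding is_cycle_def using l3 lNC dNC sNC eNC by simp
  show "{u, v} \<in> cycle_edges NC"
  proof -
    have "i + j < length NC" using lNC l_def by simp
    moreover have "Suc (i+j) mod length NC = 0" using lNC l_def by simp
    moreover have "NC!0 = u" using NCn l3 f_def u0 by simp
    moreover have "NC!(i+j) = v"
    proof (cases "j = 0")
      case True thus ?thesis using NCn lNC l_def f_def i(2) v0 by simp
    next
      case False thus ?thesis using NCn lNC l_def fj[of "i+j"] v0 by simp
    qed
    ultimately show ?thesis unfolding cycle_edges_def by (metis (mono_tags, lifting) insert_commute mem_Collect_eq)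
  qed
qed

lemma not_both_paths_end_in_cycles:
  assumes g: "graph V E" and pf: "pseudoforest V E" and por: "partial_orientation E D"
    and e: "E u v" "\<not> D u v" "\<not> D v u"
    and xs: "distinct xs" "successively D xs" "xs \<noteq> []" "hd xs = u" "set xs \<subseteq> V" "a < length xs" "D (last xs) (xs!a)"
    and ys: "distinct ys" "successively D ys" "ys \<noteq> []" "hd ys = v" "set ys \<subseteq> V" "b < length ys" "D (last ys) (ys!b)"
  shows False
proof -
  have DE: "\<And>x y. D x y \<Longrightarrow> E x y" using por unfolding partial_orientation_def by blast
  have s: "\<And>x y. E x y \<Longrightarrow> E y x" using graph_sym[OF g] by blast
  have u0: "xs!0 = u" using xs(3,4) by (simp add: hd_conv_nth)
  have v0: "ys!0 = v" using ys(3,4) by (simp add: hd_conv_nth)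
  have E_paths: "successively E xs" "successively E ys"
    using successively_mono[OF xs(2)] successively_mono[OF ys(2)] DE by blast+
  define cs1 where "cs1 = drop a xs"
  define cs2 where "cs2 = drop b ys"
  have c1: "is_cycle V E cs1" and c1D: "\<forall>t < length cs1. D (cs1!t) (cs1!(Suc t mod length cs1))"
    using is_cycle_drop_if_closing_edge[OF por xs(1,2,3,5,6,7)] cs1_def by auto
  have c2: "is_cycle V E cs2" using is_cycle_drop_if_closing_edge[OF por ys(1,2,3,5,6,7)] cs2_def by auto
  have h1: "hd cs1 = xs!a" using xs(6) cs1_def by (simp add: hd_drop_conv_nth)
  have h2: "hd cs2 = ys!b" using ys(6) cs2_def by (simp add: hd_drop_conv_nth)
  have conn1: "connected_in V E (hd cs1) u"
    using connected_in_sym[OF g connected_in_path[OF g E_paths(1) xs(5,6)]] h1 u0 by simp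
  have "connected_in V E u (hd cs2)"
    using connected_in_trans[OF connected_in_edge[OF g e(1)]] connected_in_path[OF g E_paths(2) ys(5,6)]
      h2 v0 by simp
  with conn1 have "connected_in V E (hd cs1) (hd cs2)" by (rule connected_in_trans)
  then have "cycle_edges cs1 = cycle_edges cs2"
    using pf c1 c2 unfolding pseudoforest_def by blast
  then have "set cs1 = set cs2" using Union_cycle_edges[OF c1] Union_cycle_edges[OF c2] by simp
  then have "ys!b \<in> set xs" using h2 c2 cs1_def
    by (metis hd_in_set in_set_dropD is_cycle_def list.size(3) not_numeral_le_zero)
  then have ex: "\<exists>j. j < length ys \<and> ys!j \<in> set xs" using ys(6) by blast
  text \<open>Follow \<open>ys\<close> from \<open>v\<close> until it first hits \<open>xs\<close>; together with the edge \<open>uv\<close> this closes a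
    cycle through \<open>uv\<close>, which differs from the directed cycle \<open>cs1\<close> since \<open>uv\<close> is not oriented.\<close>
  define j where "j = (LEAST j. j < length ys \<and> ys!j \<in> set xs)"
  have j: "j < length ys" "ys!j \<in> set xs" using LeastI_ex[OF ex] j_def by auto
  have jmin: "\<And>j'. j' < j \<Longrightarrow> ys!j' \<notin> set xs"
    using not_less_Least j_def j(1) by (metis less_trans)
  obtain i where i: "i < length xs" "xs!i = ys!j" using j(2) by (metis in_set_conv_nth)
  have long: "2 \<le> i + j"
  proof (rule ccontr)
    assume "\<not> 2 \<le> i + j"
    then consider "i = 0" "j = 0" | "i = 1" "j = 0" | "i = 0" "j = 1" by linarith
    then show False
    proof cases
      case 1
      then show False using i u0 v0 e(1) graph_irrefl[OF g] by simp
    next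
      case 2
      then show False using i u0 v0 e(2) successively_nth[OF xs(2), of 0] by simp
    next
      case 3
      then show False using i j u0 v0 e(3) successively_nth[OF ys(2), of 0] by simp
    qed
  qed
  define NC where "NC = map (\<lambda>t. if t \<le> i then xs!t else ys!(i + j - t)) [0..<i + j + 1]"
  note NC = is_cycle_join_paths[OF s xs(1) E_paths(1) xs(5) ys(1) E_paths(2) ys(5) i j(1) jmin u0 v0 e(1) long,
      folded NC_def]
  have "hd NC = u" using u0 by (simp add: NC_def upt_conv_Cons del: upt_Suc)
  have "{u,v} \<notin> cycle_edges cs1"
  proof
    assume "{u,v} \<in> cycle_edges cs1"
    then obtain t where t: "t < length cs1" "{u,v} = {cs1!t, cs1!(Suc t mod length cs1)}"
      unfolding cycle_edges_def by blast
    have "D (cs1!t) (cs1!(Suc t mod length cs1))" using c1D t(1) by blast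
    then show False using t(2) e(2,3) by (metis doubleton_eq_iff)
  qed
  moreover have "connected_in V E (hd cs1) (hd NC)" using conn1 \<open>hd NC = u\<close> by simp
  then have "cycle_edges cs1 = cycle_edges NC"
    using pf c1 NC(1) unfolding pseudoforest_def by blast
  ultimately show False using NC(2) by simp
qed

text \<open>To orient a free edge \<open>uv\<close>, follow \<open>D\<close> from \<open>u\<close> and from \<open>v\<close>. If one of these walks ends in a
  sink, reversing it makes room for the new edge; otherwise both end in directed cycles, which
  is impossible in a pseudoforest.\<close>

lemma partial_orientation_extend:
  assumes g: "graph V E" and pf: "pseudoforest V E" and por: "partial_orientation E D"
    and e: "E u v" "\<not> D u v" "\<not> D v u"
  shows "\<exists>D'. partial_orientation E D' \<and> (\<forall>x y. D x y \<longrightarrow> D' x y \<or> D' y x) \<and> (D' u v \<or> D' v u)"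
proof -
  have DE: "\<And>x y. D x y \<Longrightarrow> E x y" using por unfolding partial_orientation_def by blast
  have s: "\<And>x y. E x y \<Longrightarrow> E y x" using graph_sym[OF g] by blast
  have uv: "u \<noteq> v" using e(1) graph_irrefl[OF g] by metis
  have DV: "\<And>x y. D x y \<Longrightarrow> y \<in> V" using DE graph_edgeD[OF g] by blast
  have uV: "u \<in> V" "v \<in> V" using graph_edgeD[OF g e(1)] by auto
  have fin: "finite V" using graph_finite[OF g] .
  obtain xs where xs: "distinct xs" "successively D xs" "xs \<noteq> []" "hd xs = u" "set xs \<subseteq> V"
    "\<forall>y. D (last xs) y \<longrightarrow> y \<in> set xs" by (rule ex_maximal_directed_path[OF fin uV(1) DV])
  obtain ys where ys: "distinct ys" "successively D ys" "ys \<noteq> []" "hd ys = v" "set ys \<subseteq> V"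
    "\<forall>y. D (last ys) y \<longrightarrow> y \<in> set ys" by (rule ex_maximal_directed_path[OF fin uV(2) DV])
  show ?thesis
  proof (cases "\<exists>y. D (last xs) y")
    case False
    then show ?thesis
      using partial_orientation_extend_along_path_to_sink[OF por s xs(1-4) _ e(1) uv e(2,3)] by blast
  next
    case True
    then obtain y where y: "D (last xs) y" by blast
    then obtain a where a: "a < length xs" "y = xs!a" using xs(6) by (metis in_set_conv_nth)
    show ?thesis
    proof (cases "\<exists>y. D (last ys) y")
      case False
      then show ?thesis
        using partial_orientation_extend_along_path_to_sink[OF por s ys(1-4) _ s[OF e(1)] uv[symmetric] e(3) e(2)]
        by blast
    next
      case True
      then obtain y' where y': "D (last ys) y'" by blast
      then obtain b where b: "b < length ys" "y' = ys!b" using ys(6) by (metis in_set_conv_nth)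
      show ?thesis
        using not_both_paths_end_in_cycles[OF g pf por e xs(1-5) a(1) _ ys(1-5) b(1)] y a y' b by blast
    qed
  qed
qed

lemma pseudoforest_right_unique_orientation:
  assumes g: "graph V E" and pf: "pseudoforest V E"
  shows "\<exists>D. orientation E D \<and> right_unique D"
proof -
  have s: "\<And>x y. E x y \<Longrightarrow> E y x" using graph_sym[OF g] by blast
  have fin: "finite V" using graph_finite[OF g] .
  define unc where "unc D = {(x,y). E x y \<and> \<not> D x y \<and> \<not> D y x}" for D :: "'a \<Rightarrow> 'a \<Rightarrow> bool"
  have uncfin: "finite (unc D)" for D
  proof -
    have "unc D \<subseteq> V \<times> V" unfolding unc_def using graph_edgeD[OF g] by auto
    thus ?thesis using fin finite_subset by blast
  qed
  have main: "\<And>n D. card (unc D) = n \<Longrightarrow> partial_orientation E D \<Longrightarrow> \<exists>D'. orientation E D' \<and> right_unique D'"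
  proof -
    fix n
    show "\<And>D. card (unc D) = n \<Longrightarrow> partial_orientation E D \<Longrightarrow> \<exists>D'. orientation E D' \<and> right_unique D'"
    proof (induction n rule: less_induct)
      case (less n D)
      show ?case
      proof (cases "unc D = {}")
        case True
        have "orientation E D"
          unfolding orientation_def
        proof (intro conjI allI)
          fix x y
          show "E x y \<longleftrightarrow> D x y \<or> D y x"
            using True less.prems(2) s unfolding unc_def partial_orientation_def by blast
          show "D x y \<longrightarrow> \<not> D y x" using less.prems(2) unfolding partial_orientation_def by blast
        qed
        thus ?thesis using less.prems(2) unfolding partial_orientation_def by blast
      next
        case False
        then obtain u v where uv: "E u v" "\<not> D u v" "\<not> D v u" unfolding unc_def by blast
        obtain D' where D': "partial_orientation E D'" "\<forall>x y. D x y \<longrightarrow> D' x y \<or> D' y x" "D' u v \<or> D' v u"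
          using partial_orientation_extend[OF g pf less.prems(2) uv] by blast
        have sub: "unc D' \<subset> unc D"
        proof
          show "unc D' \<subseteq> unc D" unfolding unc_def using D'(2) by blast
          show "unc D' \<noteq> unc D" using uv D'(3) unfolding unc_def by blast
        qed
        hence "card (unc D') < n" using psubset_card_mono[OF uncfin sub] less.prems(1) by simp
        thus ?thesis using less.IH D'(1) by blast
      qed
    qed
  qed
  have "partial_orientation E (\<lambda>x y. False)" unfolding partial_orientation_def right_unique_def by simp
  thus ?thesis using main by blast
qed

lemma one_perfectly_orientable_if_linear_forest_1:
  assumes gG: "graph V1 E1" and lf: "linear_forest 1 V1 E1"
  shows "one_perfectly_orientable (dprod_V V1 V2) (dprod_E E1 E2)"
proof -
  have "\<not> dprod_E E1 E2 p q" for p q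
    using linear_forest_1_edgeless[OF gG lf] by (simp add: dprod_E_iff)
  then have "orientation (dprod_E E1 E2) (\<lambda>p q. False) \<and> one_perfect (dprod_E E1 E2) (\<lambda>p q. False)"
    unfolding orientation_def one_perfect_def by blast
  then show ?thesis unfolding one_perfectly_orientable_def by blast
qed

lemma one_perfectly_orientable_if_linear_forest_2_pseudoforest:
  assumes gG: "graph V1 E1" and gH: "graph V2 E2"
    and lf: "linear_forest 2 V1 E1" and pf: "pseudoforest V2 E2"
  shows "one_perfectly_orientable (dprod_V V1 V2) (dprod_E E1 E2)"
proof -
  obtain DH where DH: "orientation E2 DH" "right_unique DH"
    using pseudoforest_right_unique_orientation[OF gH pf] by blast
  define D where "D p q \<longleftrightarrow> E1 (fst p) (fst q) \<and> DH (snd p) (snd q)" for p q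
  have "orientation (dprod_E E1 E2) D"
    using DH(1) graph_sym[OF gG] unfolding orientation_def dprod_E_iff D_def by blast
  moreover have "one_perfect (dprod_E E1 E2) D"
    unfolding one_perfect_def
  proof (intro allI impI)
    fix v x y assume "D v x \<and> D v y \<and> x \<noteq> y"
    moreover have "right_unique E1" by (rule linear_forest_2_right_unique[OF gG lf])
    ultimately have "fst x = fst y" "snd x = snd y"
      using DH(2) unfolding D_def by (blast dest: right_uniqueD)+
    with \<open>D v x \<and> D v y \<and> x \<noteq> y\<close> show "dprod_E E1 E2 x y" by (simp add: prod_eq_iff)
  qed
  ultimately show ?thesis unfolding one_perfectly_orientable_def by blast
qed

text \<open>Positions \<open>0..2\<close> in a 3-linear forest and \<open>0..3\<close> in a 4-linear forest turn the product into
  a cover of \<open>P\<^sub>3 \<times> P\<^sub>4\<close>, a graph with 12 vertices and 12 edges. The table below is an orientation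
  of \<open>P\<^sub>3 \<times> P\<^sub>4\<close> in which every vertex has exactly one out-neighbour; pulled back along the
  positions it is 1-perfect, since a vertex and a position determine its neighbour.\<close>

definition grid_successor :: "nat \<Rightarrow> nat \<Rightarrow> nat \<times> nat" where
  "grid_successor i j = (if i = 0 \<and> j = 0 then (1,1) else if i = 2 \<and> j = 0 then (1,1)
     else if i = 0 \<and> j = 3 then (1,2) else if i = 2 \<and> j = 3 then (1,2)
     else if i = 1 \<and> j = 1 then (0,2) else if i = 2 \<and> j = 2 then (1,1)
     else if i = 1 \<and> j = 2 then (0,1) else if i = 2 \<and> j = 1 then (1,2)
     else if i = 0 \<and> j = 1 then (1,0) else if i = 1 \<and> j = 0 then (2,1)
     else if i = 0 \<and> j = 2 then (1,3) else if i = 1 \<and> j = 3 then (2,2) else (0,0))"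

lemma grid_successor_orientation:
  assumes "i < 3" "i' < 3" "j < 4" "j' < 4" "i' = Suc i \<or> i = Suc i'" "j' = Suc j \<or> j = Suc j'"
  shows "grid_successor i j = (i', j') \<longleftrightarrow> grid_successor i' j' \<noteq> (i, j)"
proof -
  have "i \<in> {0,1,2}" "j \<in> {0,1,2,3}" using assms(1,3) by auto
  then show ?thesis using assms(2,4,5,6) unfolding grid_successor_def by (elim insertE emptyE; auto)
qed

lemma one_perfectly_orientable_if_linear_forest_3_4:
  assumes gG: "graph V1 E1" and gH: "graph V2 E2"
    and lf3: "linear_forest 3 V1 E1" and lf4: "linear_forest 4 V2 E2"
  shows "one_perfectly_orientable (dprod_V V1 V2) (dprod_E E1 E2)"
proof -
  obtain p where p: "\<And>u. u \<in> V1 \<Longrightarrow> p u < 3"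
    "\<And>u v. E1 u v \<Longrightarrow> p v = Suc (p u) \<or> p u = Suc (p v)"
    "\<And>u v w. E1 u v \<Longrightarrow> E1 u w \<Longrightarrow> p v = p w \<Longrightarrow> v = w"
    by (rule linear_forest_position[OF gG lf3]) blast
  obtain q where q: "\<And>u. u \<in> V2 \<Longrightarrow> q u < 4"
    "\<And>u v. E2 u v \<Longrightarrow> q v = Suc (q u) \<or> q u = Suc (q v)"
    "\<And>u v w. E2 u v \<Longrightarrow> E2 u w \<Longrightarrow> q v = q w \<Longrightarrow> v = w"
    by (rule linear_forest_position[OF gH lf4]) blast
  define D where "D x y \<longleftrightarrow> dprod_E E1 E2 x y \<and>
    grid_successor (p (fst x)) (q (snd x)) = (p (fst y), q (snd y))" for x y
  have exactly_one: "D x y \<longleftrightarrow> \<not> D y x" if "dprod_E E1 E2 x y" for x y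
  proof -
    have "E1 (fst x) (fst y)" "E2 (snd x) (snd y)" using that by (simp_all add: dprod_E_iff)
    then show ?thesis
      using grid_successor_orientation[of "p (fst x)" "p (fst y)" "q (snd x)" "q (snd y)"]
        p(1,2) q(1,2) graph_edgeD[OF gG] graph_edgeD[OF gH] graph_sym[OF gG] graph_sym[OF gH]
      unfolding D_def by (auto simp: dprod_E_iff)
  qed
  have "orientation (dprod_E E1 E2) D"
    unfolding orientation_def using exactly_one by (metis D_def dprod_E_iff graph_sym[OF gG] graph_sym[OF gH])
  moreover have "one_perfect (dprod_E E1 E2) D"
    unfolding one_perfect_def
  proof (intro allI impI)
    fix v x y assume a: "D v x \<and> D v y \<and> x \<noteq> y"
    then have "p (fst x) = p (fst y)" "q (snd x) = q (snd y)" unfolding D_def by auto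
    then have "fst x = fst y" "snd x = snd y"
      using a p(3) q(3) unfolding D_def dprod_E_iff by blast+
    then show "dprod_E E1 E2 x y" using a by (simp add: prod_eq_iff)
  qed
  ultimately show ?thesis unfolding one_perfectly_orientable_def by blast
qed

lemma one_perfect_orientation_obtain:
  assumes "one_perfectly_orientable V E"
  obtains D where "orientation E D" "one_perfect E D"
  using assms unfolding one_perfectly_orientable_def by blast

lemma not_right_uniqueE:
  assumes "\<not> right_unique E"
  obtains m x y where "E m x" "E m y" "x \<noteq> y"
  using assms unfolding right_unique_def by blast

lemma max_degree_le_2_if_one_perfect_dprod:
  assumes gG: "graph V1 E1" and gH: "graph V2 E2"
    and opo: "one_perfectly_orientable (dprod_V V1 V2) (dprod_E E1 E2)"
    and "\<not> right_unique E2"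
  shows "\<forall>c x y z. E1 c x \<and> E1 c y \<and> E1 c z \<longrightarrow> x = y \<or> y = z \<or> x = z"
proof (intro allI impI, rule ccontr)
  fix c x y z assume "E1 c x \<and> E1 c y \<and> E1 c z" "\<not> (x = y \<or> y = z \<or> x = z)"
  then have claw: "E1 c x" "E1 c y" "E1 c z" "distinct [x, y, z]" by auto
  obtain D where D: "orientation (dprod_E E1 E2) D" "one_perfect (dprod_E E1 E2) D"
    using opo by (rule one_perfect_orientation_obtain)
  obtain m e1 e2 where P3: "E2 m e1" "E2 m e2" "e1 \<noteq> e2"
    using \<open>\<not> right_unique E2\<close> by (rule not_right_uniqueE)
  show False by (rule claw_times_P3_not_one_perfect[OF gG gH D claw P3])
qed

lemma acyclic_if_one_perfect_dprod:
  assumes gG: "graph V1 E1" and gH: "graph V2 E2"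
    and opo: "one_perfectly_orientable (dprod_V V1 V2) (dprod_E E1 E2)"
    and "\<not> right_unique E2"
  shows "\<forall>cs. \<not> is_cycle V1 E1 cs"
proof (intro allI notI)
  fix cs assume cs: "is_cycle V1 E1 cs"
  obtain D where D: "orientation (dprod_E E1 E2) D" "one_perfect (dprod_E E1 E2) D"
    using opo by (rule one_perfect_orientation_obtain)
  obtain m e1 e2 where P3: "E2 m e1" "E2 m e2" "e1 \<noteq> e2"
    using \<open>\<not> right_unique E2\<close> by (rule not_right_uniqueE)
  show False by (rule cycle_times_P3_not_one_perfect[OF gG gH D cs P3])
qed

lemma paths_le_4_if_one_perfect_dprod:
  assumes gG: "graph V1 E1" and gH: "graph V2 E2"
    and opo: "one_perfectly_orientable (dprod_V V1 V2) (dprod_E E1 E2)"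
    and "\<not> right_unique E2"
  shows "\<forall>xs. distinct xs \<and> successively E1 xs \<longrightarrow> length xs \<le> 4"
proof (intro allI impI, rule ccontr)
  fix xs assume xs: "distinct xs \<and> successively E1 xs" "\<not> length xs \<le> 4"
  then have "Suc 4 \<le> length xs" by simp
  then obtain v1 v2 v3 v4 v5 ys where xs_eq: "xs = v1 # v2 # v3 # v4 # v5 # ys"
    by (auto simp: numeral_eq_Suc Suc_le_length_iff)
  have "\<not> E1 (xs!1) (xs!3)"
    using no_chord_if_acyclic[OF gG acyclic_if_one_perfect_dprod[OF assms], of xs 1] xs xs_eq by simp
  then have P5: "E1 v1 v2" "E1 v2 v3" "E1 v3 v4" "E1 v4 v5" "distinct [v1, v2, v3, v4, v5]"
    "\<not> E1 v2 v4"
    using xs xs_eq by auto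
  obtain D where D: "orientation (dprod_E E1 E2) D" "one_perfect (dprod_E E1 E2) D"
    using opo by (rule one_perfect_orientation_obtain)
  obtain m e1 e2 where P3: "E2 m e1" "E2 m e2" "e1 \<noteq> e2"
    using \<open>\<not> right_unique E2\<close> by (rule not_right_uniqueE)
  show False by (rule P5_times_P3_not_one_perfect[OF gG gH D P5 P3])
qed

lemma linear_forest_4_if_one_perfect_dprod:
  assumes gG: "graph V1 E1" and gH: "graph V2 E2"
    and opo: "one_perfectly_orientable (dprod_V V1 V2) (dprod_E E1 E2)"
    and "\<not> right_unique E2"
  shows "linear_forest 4 V1 E1"
  using linear_forestI[OF gG _ max_degree_le_2_if_one_perfect_dprod[OF assms]
      acyclic_if_one_perfect_dprod[OF assms] paths_le_4_if_one_perfect_dprod[OF assms]] by simp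

lemma linear_forest_3_if_one_perfect_dprod:
  assumes gG: "graph V1 E1" and gH: "graph V2 E2"
    and opo: "one_perfectly_orientable (dprod_V V1 V2) (dprod_E E1 E2)"
    and "\<not> right_unique E1" "\<not> right_unique E2"
  shows "linear_forest 3 V1 E1 \<or> linear_forest 3 V2 E2"
proof (rule ccontr)
  have opo': "one_perfectly_orientable (dprod_V V2 V1) (dprod_E E2 E1)"
    using opo by (rule one_perfectly_orientable_dprod_swap)
  assume "\<not> (linear_forest 3 V1 E1 \<or> linear_forest 3 V2 E2)"
  moreover have "linear_forest 3 V1 E1" if "\<forall>xs. distinct xs \<and> successively E1 xs \<longrightarrow> length xs \<le> 3"
    by (rule linear_forestI[OF gG _ max_degree_le_2_if_one_perfect_dprod[OF gG gH opo assms(5)]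
        acyclic_if_one_perfect_dprod[OF gG gH opo assms(5)] that]) simp
  moreover have "linear_forest 3 V2 E2" if "\<forall>ys. distinct ys \<and> successively E2 ys \<longrightarrow> length ys \<le> 3"
    by (rule linear_forestI[OF gH _ max_degree_le_2_if_one_perfect_dprod[OF gH gG opo' assms(4)]
        acyclic_if_one_perfect_dprod[OF gH gG opo' assms(4)] that]) simp
  ultimately obtain xs ys where xs: "distinct xs" "successively E1 xs" "Suc 3 \<le> length xs"
    and ys: "distinct ys" "successively E2 ys" "Suc 3 \<le> length ys"
    by (meson not_less_eq_eq)
  then obtain v1 v2 v3 v4 xs' w1 w2 w3 w4 ys' where
    xs_eq: "xs = v1 # v2 # v3 # v4 # xs'" and ys_eq: "ys = w1 # w2 # w3 # w4 # ys'"
    by (auto simp: numeral_eq_Suc Suc_le_length_iff)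
  have "\<not> E1 (xs!0) (xs!2)" "\<not> E1 (xs!1) (xs!3)"
    using no_chord_if_acyclic[OF gG acyclic_if_one_perfect_dprod[OF gG gH opo assms(5)] xs(1,2), of 0]
      no_chord_if_acyclic[OF gG acyclic_if_one_perfect_dprod[OF gG gH opo assms(5)] xs(1,2), of 1]
      xs_eq by simp_all
  then have P4: "E1 v1 v2" "E1 v2 v3" "E1 v3 v4" "distinct [v1, v2, v3, v4]"
    "\<not> E1 v1 v3" "\<not> E1 v2 v4"
    using xs xs_eq by auto
  have P4': "E2 w1 w2" "E2 w2 w3" "E2 w3 w4" "distinct [w1, w2, w3, w4]"
    using ys ys_eq by auto
  obtain D where D: "orientation (dprod_E E1 E2) D" "one_perfect (dprod_E E1 E2) D"
    using opo by (rule one_perfect_orientation_obtain)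
  show False by (rule P4_times_P4_not_one_perfect[OF gG gH D P4 P4'])
qed

lemma one_perfectly_orientable_dprodD:
  assumes gG: "graph V1 E1" and gH: "graph V2 E2"
    and opo: "one_perfectly_orientable (dprod_V V1 V2) (dprod_E E1 E2)"
  shows "linear_forest 1 V1 E1 \<or> linear_forest 1 V2 E2 \<or>
     (linear_forest 2 V1 E1 \<and> pseudoforest V2 E2) \<or>
     (linear_forest 2 V2 E2 \<and> pseudoforest V1 E1) \<or>
     (linear_forest 3 V1 E1 \<and> linear_forest 4 V2 E2) \<or>
     (linear_forest 3 V2 E2 \<and> linear_forest 4 V1 E1)"
proof -
  have opo': "one_perfectly_orientable (dprod_V V2 V1) (dprod_E E2 E1)"
    using opo by (rule one_perfectly_orientable_dprod_swap)
  consider "\<forall>a b. \<not> E1 a b" | "\<forall>a b. \<not> E2 a b" | "\<exists>a b. E1 a b" "\<exists>a b. E2 a b"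
    by blast
  then show ?thesis
  proof cases
    case 3
    then obtain a b a' b' where "E1 a b" "E2 a' b'" by blast
    obtain D where "orientation (dprod_E E1 E2) D" "one_perfect (dprod_E E1 E2) D"
      using opo by (rule one_perfect_orientation_obtain)
    with \<open>E1 a b\<close> have pf2: "pseudoforest V2 E2"
      by (intro pseudoforest_if_one_perfect_dprod[OF gG gH])
    obtain D' where "orientation (dprod_E E2 E1) D'" "one_perfect (dprod_E E2 E1) D'"
      using opo' by (rule one_perfect_orientation_obtain)
    with \<open>E2 a' b'\<close> have pf1: "pseudoforest V1 E1"
      by (intro pseudoforest_if_one_perfect_dprod[OF gH gG])
    consider "right_unique E1" | "right_unique E2" | "\<not> right_unique E1" "\<not> right_unique E2"
      by blast
    then show ?thesis
    proof cases
      case 1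
      then show ?thesis using linear_forest_2_if_right_unique[OF gG] pf2 by blast
    next
      case 2
      then show ?thesis using linear_forest_2_if_right_unique[OF gH] pf1 by blast
    next
      case 3
      then have "linear_forest 4 V1 E1" "linear_forest 4 V2 E2"
        using linear_forest_4_if_one_perfect_dprod[OF gG gH opo]
          linear_forest_4_if_one_perfect_dprod[OF gH gG opo'] by blast+
      then show ?thesis using linear_forest_3_if_one_perfect_dprod[OF gG gH opo 3] by blast
    qed
  qed (use linear_forest_1_if_edgeless[OF gG] linear_forest_1_if_edgeless[OF gH] in blast)+
qed

lemma one_perfectly_orientable_dprodI:
  assumes gG: "graph V1 E1" and gH: "graph V2 E2"
    and "linear_forest 1 V1 E1 \<or> linear_forest 1 V2 E2 \<or>
     (linear_forest 2 V1 E1 \<and> pseudoforest V2 E2) \<or>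
     (linear_forest 2 V2 E2 \<and> pseudoforest V1 E1) \<or>
     (linear_forest 3 V1 E1 \<and> linear_forest 4 V2 E2) \<or>
     (linear_forest 3 V2 E2 \<and> linear_forest 4 V1 E1)"
  shows "one_perfectly_orientable (dprod_V V1 V2) (dprod_E E1 E2)"
  using assms(3)
proof (elim disjE conjE)
  assume "linear_forest 1 V1 E1"
  then show ?thesis by (rule one_perfectly_orientable_if_linear_forest_1[OF gG])
next
  assume "linear_forest 1 V2 E2"
  then show ?thesis
    by (rule one_perfectly_orientable_dprod_swap[OF one_perfectly_orientable_if_linear_forest_1[OF gH]])
next
  assume "linear_forest 2 V1 E1" "pseudoforest V2 E2"
  then show ?thesis by (rule one_perfectly_orientable_if_linear_forest_2_pseudoforest[OF gG gH])
next
  assume "linear_forest 2 V2 E2" "pseudoforest V1 E1"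
  then show ?thesis
    by (rule one_perfectly_orientable_dprod_swap[OF
          one_perfectly_orientable_if_linear_forest_2_pseudoforest[OF gH gG]])
next
  assume "linear_forest 3 V1 E1" "linear_forest 4 V2 E2"
  then show ?thesis by (rule one_perfectly_orientable_if_linear_forest_3_4[OF gG gH])
next
  assume "linear_forest 3 V2 E2" "linear_forest 4 V1 E1"
  then show ?thesis
    by (rule one_perfectly_orientable_dprod_swap[OF one_perfectly_orientable_if_linear_forest_3_4[OF gH gG]])
qed

theorem theorem11:
  fixes V1 :: "'a set" and E1 :: "'a \<Rightarrow> 'a \<Rightarrow> bool"
    and V2 :: "'b set" and E2 :: "'b \<Rightarrow> 'b \<Rightarrow> bool"
  assumes "graph V1 E1" and "graph V2 E2"
    and "card V1 \<ge> 2" and "card V2 \<ge> 2"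
  shows "one_perfectly_orientable (dprod_V V1 V2) (dprod_E E1 E2) \<longleftrightarrow>
    (linear_forest 1 V1 E1 \<or> linear_forest 1 V2 E2 \<or>
     (linear_forest 2 V1 E1 \<and> pseudoforest V2 E2) \<or>
     (linear_forest 2 V2 E2 \<and> pseudoforest V1 E1) \<or>
     (linear_forest 3 V1 E1 \<and> linear_forest 4 V2 E2) \<or>
     (linear_forest 3 V2 E2 \<and> linear_forest 4 V1 E1))"
  using one_perfectly_orientable_dprodD[OF assms(1,2)] one_perfectly_orientable_dprodI[OF assms(1,2)]
  by blast

end
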